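(* Let $R$ be a local ring with $1/2\in R$, $H=R^n$, and let $M\subset H\oplus H^*$ be a totally isotropic direct summand of rank $n$ such that the submodule $\{\omega\in\bigwedge H: x\cdot\omega=0\ \forall x\in M\}$ is generated by a single element $s\in\bigwedge^{\mathrm{odd}}H$ (i.e. $M$ lies in the family of maximal isotropic summands not containing $H^*$). Let $s_1\in H$ be the degree-one component of $s$, and let $\lambda(H^* )\subseteq R$ denote the ideal $\{f'(s_1): f'\in H^*\}$ generated by the coordinates of $s_1$. Let $P\colon M\to H^*$ be the restriction to $M$ of the projection $H\oplus H^*\to H^*$. The following are equivalent: (1) There exist a basis $e_1,\dots,e_n$ of $H$ with dual basis $e_1',\dots,e_n'$ of $H^*$ and an $(n-1)\times(n-1)$ skew-symmetric matrix $X$ with entries in $R$ such that $M$ is spanned by $e_1$ together with the $n-1$ elements $e_i'+\sum_{j=2}^n X_{ji}e_j$ for $i=2,\dots,n$ (rows/columns of $X$ indexed by $2,\dots,n$). (2) $\lambda(H^* )=R$. (3) $I_{n-1}(P)=R$, where $I_{n-1}(P)$ is the ideal of $(n-1)\times(n-1)$ minors of $P$.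
   Context: On $H\oplus H^*$ consider the quadratic form $Q(f,f')=f'(f)$; a submodule $M$ is totally isotropic if $Q|_M=0$. The Clifford action of $H\oplus H^*$ on the exterior algebra $\bigwedge H$ is $(f,f')\cdot\omega=f\wedge\omega+\iota_{f'}(\omega)$, where $\iota_{f'}(e_1\wedge\cdots\wedge e_j)=\sum_{i}(-1)^{i-1}f'(e_i)\,e_1\wedge\cdots\wedge\widehat{e_i}\wedge\cdots\wedge e_j$. Write $\bigwedge^{\mathrm{odd}}H=\bigoplus_{k\text{ odd}}\bigwedge^kH$. *)

theory Defs
  imports "HOL-Combinatorics.Permutations"
begin

text \<open>H = R^n is modelled as
  functions nat => R vanishing outside {..<n} (coordinates w.r.t. the standard basis);
  H* is identified with R^n via the standard dual basis, so f'(h) = sum_{i<n} f' i * h i. The exterior algebra of H is modelled as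
  coefficient functions nat set => R (coefficient of e_S, S a subset of {..<n} written in
  increasing order), vanishing on sets not contained in {..<n}.\<close>

definition local_ring :: "'a::comm_ring_1 itself \<Rightarrow> bool" where
  "local_ring _ \<longleftrightarrow> (0::'a) \<noteq> 1 \<and>
     (\<forall>a b::'a. \<not> a dvd 1 \<longrightarrow> \<not> b dvd 1 \<longrightarrow> \<not> (a + b) dvd 1)"

definition Hcar :: "nat \<Rightarrow> (nat \<Rightarrow> 'a::zero) set" where
  "Hcar n = {v. \<forall>i\<ge>n. v i = 0}"

definition HHcar :: "nat \<Rightarrow> ((nat \<Rightarrow> 'a::zero) \<times> (nat \<Rightarrow> 'a)) set" where
  "HHcar n = Hcar n \<times> Hcar n"

definition pzero :: "(nat \<Rightarrow> 'a::zero) \<times> (nat \<Rightarrow> 'a)" where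
  "pzero = (\<lambda>_. 0, \<lambda>_. 0)"

definition padd :: "(nat \<Rightarrow> 'a::plus) \<times> (nat \<Rightarrow> 'a) \<Rightarrow> (nat \<Rightarrow> 'a) \<times> (nat \<Rightarrow> 'a)
     \<Rightarrow> (nat \<Rightarrow> 'a) \<times> (nat \<Rightarrow> 'a)" where
  "padd x y = (\<lambda>i. fst x i + fst y i, \<lambda>i. snd x i + snd y i)"

definition psmul :: "'a::times \<Rightarrow> (nat \<Rightarrow> 'a) \<times> (nat \<Rightarrow> 'a) \<Rightarrow> (nat \<Rightarrow> 'a) \<times> (nat \<Rightarrow> 'a)" where
  "psmul r x = (\<lambda>i. r * fst x i, \<lambda>i. r * snd x i)"

definition vlc :: "(nat \<Rightarrow> 'a::comm_ring_1) \<Rightarrow> (nat \<Rightarrow> nat \<Rightarrow> 'a) \<Rightarrow> nat \<Rightarrow> nat \<Rightarrow> 'a" where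
  "vlc c v m = (\<lambda>i. \<Sum>k<m. c k * v k i)"

definition plc :: "(nat \<Rightarrow> 'a::comm_ring_1) \<Rightarrow> (nat \<Rightarrow> (nat \<Rightarrow> 'a) \<times> (nat \<Rightarrow> 'a)) \<Rightarrow> nat
     \<Rightarrow> (nat \<Rightarrow> 'a) \<times> (nat \<Rightarrow> 'a)" where
  "plc c v m = (vlc c (\<lambda>k. fst (v k)) m, vlc c (\<lambda>k. snd (v k)) m)"

definition is_submod :: "nat \<Rightarrow> ((nat \<Rightarrow> 'a::comm_ring_1) \<times> (nat \<Rightarrow> 'a)) set \<Rightarrow> bool" where
  "is_submod n M \<longleftrightarrow> M \<subseteq> HHcar n \<and> pzero \<in> M \<and>
     (\<forall>x\<in>M. \<forall>y\<in>M. padd x y \<in> M) \<and> (\<forall>r. \<forall>x\<in>M. psmul r x \<in> M)"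

definition is_direct_summand :: "nat \<Rightarrow> ((nat \<Rightarrow> 'a::comm_ring_1) \<times> (nat \<Rightarrow> 'a)) set \<Rightarrow> bool" where
  "is_direct_summand n M \<longleftrightarrow> is_submod n M \<and>
     (\<exists>N. is_submod n N \<and> M \<inter> N = {pzero} \<and>
          (\<forall>x\<in>HHcar n. \<exists>m\<in>M. \<exists>k\<in>N. x = padd m k))"

definition is_pbasis :: "((nat \<Rightarrow> 'a::comm_ring_1) \<times> (nat \<Rightarrow> 'a)) set \<Rightarrow> nat
     \<Rightarrow> (nat \<Rightarrow> (nat \<Rightarrow> 'a) \<times> (nat \<Rightarrow> 'a)) \<Rightarrow> bool" where
  "is_pbasis M m b \<longleftrightarrow> (\<forall>k<m. b k \<in> M) \<and>
     (\<forall>x\<in>M. \<exists>!c. (\<forall>k\<ge>m. c k = 0) \<and> x = plc c b m)"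

definition is_Hbasis :: "nat \<Rightarrow> (nat \<Rightarrow> nat \<Rightarrow> 'a::comm_ring_1) \<Rightarrow> bool" where
  "is_Hbasis n e \<longleftrightarrow> (\<forall>k<n. e k \<in> Hcar n) \<and>
     (\<forall>x\<in>Hcar n. \<exists>!c. (\<forall>k\<ge>n. c k = 0) \<and> x = vlc c e n)"

definition is_dual_basis :: "nat \<Rightarrow> (nat \<Rightarrow> nat \<Rightarrow> 'a::comm_ring_1) \<Rightarrow> (nat \<Rightarrow> nat \<Rightarrow> 'a) \<Rightarrow> bool" where
  "is_dual_basis n e e' \<longleftrightarrow> (\<forall>k<n. e' k \<in> Hcar n) \<and>
     (\<forall>i<n. \<forall>j<n. (\<Sum>k<n. e' i k * e j k) = (if i = j then 1 else 0))"

definition Qform :: "nat \<Rightarrow> (nat \<Rightarrow> 'a::comm_ring_1) \<times> (nat \<Rightarrow> 'a) \<Rightarrow> 'a" where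
  "Qform n x = (\<Sum>i<n. snd x i * fst x i)"

definition totally_isotropic :: "nat \<Rightarrow> ((nat \<Rightarrow> 'a::comm_ring_1) \<times> (nat \<Rightarrow> 'a)) set \<Rightarrow> bool" where
  "totally_isotropic n M \<longleftrightarrow> (\<forall>x\<in>M. Qform n x = 0)"

definition ext_alg :: "nat \<Rightarrow> (nat set \<Rightarrow> 'a::zero) set" where
  "ext_alg n = {w. \<forall>S. \<not> S \<subseteq> {..<n} \<longrightarrow> w S = 0}"

definition ext_odd :: "nat \<Rightarrow> (nat set \<Rightarrow> 'a::zero) set" where
  "ext_odd n = {w \<in> ext_alg n. \<forall>S. even (card S) \<longrightarrow> w S = 0}"

text \<open>f \<wedge> w, using e_i \<wedge> e_S = (-1)^{#{j\<in>S. j<i}} e_{S \<union> {i}}.\<close>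
definition wedge1 :: "nat \<Rightarrow> (nat \<Rightarrow> 'a::comm_ring_1) \<Rightarrow> (nat set \<Rightarrow> 'a) \<Rightarrow> nat set \<Rightarrow> 'a" where
  "wedge1 n f w = (\<lambda>T. if T \<subseteq> {..<n} then
      (\<Sum>i\<in>T. (-1) ^ card {j\<in>T. j < i} * f i * w (T - {i})) else 0)"

text \<open>Contraction iota_{f'} w, using
  iota_{f'}(e_S) = sum_{i\<in>S} (-1)^{#{j\<in>S. j<i}} f'(e_i) e_{S - {i}}.\<close>
definition contr :: "nat \<Rightarrow> (nat \<Rightarrow> 'a::comm_ring_1) \<Rightarrow> (nat set \<Rightarrow> 'a) \<Rightarrow> nat set \<Rightarrow> 'a" where
  "contr n f' w = (\<lambda>T. if T \<subseteq> {..<n} then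
      (\<Sum>i\<in>{..<n} - T. (-1) ^ card {j\<in>T. j < i} * f' i * w (insert i T)) else 0)"

definition cliff :: "nat \<Rightarrow> (nat \<Rightarrow> 'a::comm_ring_1) \<times> (nat \<Rightarrow> 'a) \<Rightarrow> (nat set \<Rightarrow> 'a) \<Rightarrow> nat set \<Rightarrow> 'a" where
  "cliff n x w = (\<lambda>T. wedge1 n (fst x) w T + contr n (snd x) w T)"

definition detk :: "nat \<Rightarrow> (nat \<Rightarrow> nat \<Rightarrow> 'a::comm_ring_1) \<Rightarrow> 'a" where
  "detk k A = (\<Sum>p | p permutes {..<k}. of_int (sign p) * (\<Prod>i<k. A i (p i)))"

definition ideal_gen :: "'a::comm_ring_1 set \<Rightarrow> 'a set" where
  "ideal_gen G = {x. \<exists>F c. finite F \<and> F \<subseteq> G \<and> x = (\<Sum>g\<in>F. c g * g)}"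

definition minor_ideal :: "nat \<Rightarrow> nat \<Rightarrow> (nat \<Rightarrow> nat \<Rightarrow> 'a::comm_ring_1) \<Rightarrow> 'a set" where
  "minor_ideal n k A = ideal_gen
     {detk k (\<lambda>a c. A (sorted_list_of_set I ! a) (sorted_list_of_set J ! c)) | I J.
        I \<subseteq> {..<n} \<and> J \<subseteq> {..<n} \<and> card I = k \<and> card J = k}"

text \<open>Matrix of P : M \<rightarrow> H*, (f,f') \<mapsto> f', w.r.t. the basis b of M and the standard
  dual basis of H*: column j is the coordinate vector of P(b_j).\<close>
definition Pmatrix :: "(nat \<Rightarrow> (nat \<Rightarrow> 'a) \<times> (nat \<Rightarrow> 'a)) \<Rightarrow> nat \<Rightarrow> nat \<Rightarrow> 'a" where
  "Pmatrix b = (\<lambda>i j. snd (b j) i)"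

end

(*
  The elements (f, f') of M annihilate s. In degree 0 this says f'(s1) = 0 for the degree-one
  part s1 of s; in degree 2 it determines f, up to a multiple of s1, linearly in f'. So if a
  coordinate of s1 is a unit, s1 extends to a basis e_1 = s1, e_2, ..., e_n of H in which M has
  the normal form (1), with X skew-symmetric by isotropy; in that form P visibly has a unit
  maximal minor.

  Conversely, a Clifford product of generators of M applied to any element of the exterior
  algebra is annihilated by M, hence a multiple of s. For the generators of the normal form
  applied to e_2 /\ ... /\ e_n its degree-one part is e_1, so s1 has a unit coordinate. If a
  maximal minor of P is a unit, M has a basis whose H*-parts are unit vectors except for a last
  one z e_a: were z a unit, the same construction would give the odd element s a nonzero scalar
  part; otherwise isotropy forces z = 0 and a unit a-th coordinate in the H-part of the last
  basis vector, which the Clifford product exhibits as a multiple of the a-th coordinate of s1.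
*)

theory Submission
  imports Defs "Jordan_Normal_Form.Determinant"
begin

section \<open>The Clifford action on the exterior algebra\<close>

definition ext_sign :: "nat set \<Rightarrow> nat \<Rightarrow> 'a::comm_ring_1" where
  "ext_sign T i = (-1) ^ card {j\<in>T. j < i}"

lemma ext_sign_square [simp]: "ext_sign T i * ext_sign T i = (1::'a::comm_ring_1)"
  unfolding ext_sign_def by (simp add: power_mult_distrib[symmetric])

lemma ext_sign_square_mult [simp]: "ext_sign T i * (ext_sign T i * x) = (x::'a::comm_ring_1)"
  by (simp add: mult.assoc[symmetric])

lemma ext_sign_remove:
  assumes "finite T" "i \<noteq> k"
  shows "ext_sign (T - {i}) k = (ext_sign T k :: 'a::comm_ring_1) * (if i < k \<and> i \<in> T then -1 else 1)"
proof (cases "i < k \<and> i \<in> T")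
  case True
  have "{j\<in>T. j < k} = insert i {j\<in>T - {i}. j < k}" using True by auto
  hence "card {j\<in>T. j < k} = Suc (card {j\<in>T - {i}. j < k})" using assms by simp
  thus ?thesis using True unfolding ext_sign_def by simp
next
  case False
  have "{j\<in>T. j < k} = {j\<in>T - {i}. j < k}" using False by auto
  hence "ext_sign (T - {i}) k = (ext_sign T k :: 'a)" unfolding ext_sign_def by simp
  thus ?thesis by (simp only: if_not_P[OF False] mult_1_right)
qed

lemma ext_sign_remove_self: "ext_sign (T - {i}) i = ext_sign T i"
proof -
  have "{j\<in>T - {i}. j < i} = {j\<in>T. j < i}" by auto
  thus ?thesis unfolding ext_sign_def by simp
qed

lemma ext_sign_insert:
  assumes "finite T" "i \<noteq> k" "i \<notin> T"
  shows "ext_sign (insert i T) k = (ext_sign T k :: 'a::comm_ring_1) * (if i < k then -1 else 1)"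
proof -
  have "ext_sign T k = (ext_sign (insert i T) k :: 'a) * (if i < k \<and> i \<in> insert i T then -1 else 1)"
    using ext_sign_remove[of "insert i T" i k] assms by simp
  thus ?thesis by (auto split: if_splits)
qed

lemma ext_sign_insert_self: "ext_sign (insert i T) i = ext_sign T i"
proof -
  have "{j\<in>insert i T. j < i} = {j\<in>T. j < i}" by auto
  thus ?thesis unfolding ext_sign_def by simp
qed

lemma wedge1_ext_sign:
  "wedge1 n f w T = (if T \<subseteq> {..<n} then (\<Sum>i\<in>T. ext_sign T i * f i * w (T - {i})) else 0)"
  unfolding wedge1_def ext_sign_def by simp

lemma contr_ext_sign:
  "contr n f w T = (if T \<subseteq> {..<n} then (\<Sum>i\<in>{..<n} - T. ext_sign T i * f i * w (insert i T)) else 0)"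
  unfolding contr_def ext_sign_def by simp

lemma sum_Diff_singleton_if: "finite T \<Longrightarrow> (\<Sum>k\<in>T - {i}. h k) = (\<Sum>k\<in>T. if k = i then 0 else h k)"
  by (simp add: sum.If_cases Diff_eq Int_commute)

lemma wedge1_anticommute:
  fixes f g :: "nat \<Rightarrow> 'a::comm_ring_1"
  shows "wedge1 n f (wedge1 n g w) T = - wedge1 n g (wedge1 n f w) T"
proof (cases "T \<subseteq> {..<n}")
  case False thus ?thesis by (simp add: wedge1_ext_sign)
next
  case True
  have fin: "finite T" using True finite_subset by blast
  have sub: "\<And>i. T - {i} \<subseteq> {..<n}" using True by auto
  define t where "t f g i k = (if k = i then 0 else
      ext_sign T i * ext_sign (T - {i}) k * f i * g k * w (T - {i} - {k}) :: 'a)" for f g :: "nat \<Rightarrow> 'a" and i k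
  have expand: "wedge1 n f (wedge1 n g w) T = (\<Sum>i\<in>T. \<Sum>k\<in>T. t f g i k)" for f g
    unfolding wedge1_ext_sign[of n f] t_def using True sub fin
    by (simp add: wedge1_ext_sign sum_Diff_singleton_if sum_distrib_left mult_ac if_distrib cong: if_cong)
  \<comment> \<open>removing first i and then k costs the opposite sign of removing k and then i\<close>
  have swap: "t g f k i = - t f g i k" if "i \<in> T" "k \<in> T" for i k
  proof -
    have "T - {k} - {i} = T - {i} - {k}" by auto
    thus ?thesis using that fin
      by (auto simp: t_def ext_sign_remove[of T k i] ext_sign_remove[of T i k] algebra_simps)
  qed
  have "(\<Sum>i\<in>T. \<Sum>k\<in>T. t g f i k) = (\<Sum>k\<in>T. \<Sum>i\<in>T. t g f i k)" by (rule sum.swap)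
  also have "\<dots> = - (\<Sum>k\<in>T. \<Sum>i\<in>T. t f g k i)"
    by (auto simp: swap sum_negf[symmetric] intro!: sum.cong)
  finally show ?thesis unfolding expand by simp
qed

lemma contr_anticommute:
  fixes f g :: "nat \<Rightarrow> 'a::comm_ring_1"
  shows "contr n f (contr n g w) T = - contr n g (contr n f w) T"
proof (cases "T \<subseteq> {..<n}")
  case False thus ?thesis by (simp add: contr_ext_sign)
next
  case True
  have fin: "finite T" using True finite_subset by blast
  let ?D = "{..<n} - T"
  define t where "t f g i k = (if k = i then 0 else
      ext_sign T i * ext_sign (insert i T) k * f i * g k * w (insert k (insert i T)) :: 'a)"
    for f g :: "nat \<Rightarrow> 'a" and i k
  have sub: "\<And>i. i \<in> ?D \<Longrightarrow> insert i T \<subseteq> {..<n}" using True by auto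
  have dd: "\<And>i. {..<n} - insert i T = ?D - {i}" by auto
  have expand: "contr n f (contr n g w) T = (\<Sum>i\<in>?D. \<Sum>k\<in>?D. t f g i k)" for f g
    unfolding contr_ext_sign[of n f] t_def using True
    by (auto simp: contr_ext_sign sub dd sum_Diff_singleton_if sum_distrib_left mult_ac if_distrib
        cong: if_cong intro!: sum.cong)
  have swap: "t g f k i = - t f g i k" if "i \<in> ?D" "k \<in> ?D" for i k
  proof -
    have "insert i (insert k T) = insert k (insert i T)" by auto
    thus ?thesis using that fin
      by (auto simp: t_def ext_sign_insert[of T k i] ext_sign_insert[of T i k] algebra_simps)
  qed
  have "(\<Sum>i\<in>?D. \<Sum>k\<in>?D. t g f i k) = (\<Sum>k\<in>?D. \<Sum>i\<in>?D. t g f i k)" by (rule sum.swap)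
  also have "\<dots> = - (\<Sum>k\<in>?D. \<Sum>i\<in>?D. t f g k i)"
    by (auto simp: swap sum_negf[symmetric] intro!: sum.cong)
  finally show ?thesis unfolding expand by simp
qed

definition pairing :: "nat \<Rightarrow> (nat \<Rightarrow> 'a::comm_ring_1) \<Rightarrow> (nat \<Rightarrow> 'a) \<Rightarrow> 'a" where
  "pairing n p f = (\<Sum>i<n. p i * f i)"

lemma contr_wedge1_anticommutator:
  fixes f p :: "nat \<Rightarrow> 'a::comm_ring_1"
  assumes w: "w \<in> ext_alg n"
  shows "contr n p (wedge1 n f w) T + wedge1 n f (contr n p w) T = pairing n p f * w T"
proof (cases "T \<subseteq> {..<n}")
  case False thus ?thesis using w by (simp add: contr_ext_sign wedge1_ext_sign ext_alg_def)
next
  case True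
  have fin: "finite T" using True finite_subset by blast
  let ?D = "{..<n} - T"
  define t where "t i k = ext_sign T i * ext_sign (insert i T) k * p i * f k * w (insert i T - {k})"
    for i k
  have sub: "\<And>i. i \<in> ?D \<Longrightarrow> insert i T \<subseteq> {..<n}" using True by auto
  have sub2: "\<And>k. T - {k} \<subseteq> {..<n}" using True by auto
  have contr_wedge: "contr n p (wedge1 n f w) T = (\<Sum>i\<in>?D. p i * f i * w T) + (\<Sum>i\<in>?D. \<Sum>k\<in>T. t i k)"
  proof -
    have "contr n p (wedge1 n f w) T = (\<Sum>i\<in>?D. ext_sign T i * p i *
        (\<Sum>k\<in>insert i T. ext_sign (insert i T) k * f k * w (insert i T - {k})))"
      unfolding contr_ext_sign[of n p] using True sub by (auto simp: wedge1_ext_sign intro!: sum.cong)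
    also have "\<dots> = (\<Sum>i\<in>?D. p i * f i * w T + (\<Sum>k\<in>T. t i k))"
    proof (rule sum.cong)
      fix i assume "i \<in> ?D"
      hence iT: "i \<notin> T" by auto
      hence "insert i T - {i} = T" by auto
      thus "ext_sign T i * p i * (\<Sum>k\<in>insert i T. ext_sign (insert i T) k * f k * w (insert i T - {k})) =
         p i * f i * w T + (\<Sum>k\<in>T. t i k)"
        using iT fin by (simp add: t_def ext_sign_insert_self distrib_left sum_distrib_left mult_ac)
    qed simp
    finally show ?thesis by (simp add: sum.distrib)
  qed
  have wedge_contr: "wedge1 n f (contr n p w) T = (\<Sum>k\<in>T. f k * p k * w T) + (\<Sum>i\<in>?D. \<Sum>k\<in>T. - t i k)"
  proof -
    have "wedge1 n f (contr n p w) T = (\<Sum>k\<in>T. ext_sign T k * f k *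
        (\<Sum>i\<in>{..<n} - (T - {k}). ext_sign (T - {k}) i * p i * w (insert i (T - {k}))))"
      unfolding wedge1_ext_sign[of n f] using True sub2 by (auto simp: contr_ext_sign intro!: sum.cong)
    also have "\<dots> = (\<Sum>k\<in>T. f k * p k * w T + (\<Sum>i\<in>?D. - t i k))"
    proof (rule sum.cong)
      fix k assume k: "k \<in> T"
      have e: "insert k (T - {k}) = T" using k by auto
      have d: "{..<n} - (T - {k}) = insert k ?D" using k True by auto
      \<comment> \<open>inserting i after removing k, or removing k after inserting i, differ by a sign\<close>
      have "ext_sign T k * ext_sign (T - {k}) i * f k * p i * w (insert i (T - {k})) = - t i k"
        if i: "i \<in> ?D" for i
      proof -
        have "i \<noteq> k" "i \<notin> T" "insert i T - {k} = insert i (T - {k})" using i k by auto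
        thus ?thesis using k fin
          by (auto simp: t_def ext_sign_insert[of T i k] ext_sign_remove[of T k i] algebra_simps)
      qed
      moreover have "k \<notin> ?D" using k by auto
      ultimately show "ext_sign T k * f k * (\<Sum>i\<in>{..<n} - (T - {k}). ext_sign (T - {k}) i * p i *
          w (insert i (T - {k}))) = f k * p k * w T + (\<Sum>i\<in>?D. - t i k)"
        unfolding d using k by (simp add: e insert_absorb ext_sign_remove_self distrib_left sum_distrib_left mult_ac)
    qed simp
    also have "\<dots> = (\<Sum>k\<in>T. f k * p k * w T) + (\<Sum>i\<in>?D. \<Sum>k\<in>T. - t i k)"
      by (simp add: sum.distrib sum.swap[of _ T])
    finally show ?thesis .
  qed
  have "(\<Sum>i\<in>?D. p i * f i * w T) + (\<Sum>k\<in>T. f k * p k * w T) = (\<Sum>i\<in>?D \<union> T. p i * f i * w T)"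
    by (subst sum.union_disjoint) (auto simp: fin mult_ac)
  also have "?D \<union> T = {..<n}" using True by auto
  finally have "(\<Sum>i\<in>?D. p i * f i * w T) + (\<Sum>k\<in>T. f k * p k * w T) = pairing n p f * w T"
    by (simp add: pairing_def sum_distrib_right)
  thus ?thesis unfolding contr_wedge wedge_contr by (simp add: sum_negf)
qed

definition polar :: "nat \<Rightarrow> (nat \<Rightarrow> 'a::comm_ring_1) \<times> (nat \<Rightarrow> 'a) \<Rightarrow> (nat \<Rightarrow> 'a) \<times> (nat \<Rightarrow> 'a) \<Rightarrow> 'a" where
  "polar n x y = pairing n (snd x) (fst y) + pairing n (snd y) (fst x)"

lemma polar_self: "polar n x x = 2 * Qform n x"
  by (simp add: polar_def pairing_def Qform_def)

lemma Qform_padd: "Qform n (padd x y) = Qform n x + Qform n y + polar n x y"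
  by (simp add: Qform_def padd_def polar_def pairing_def algebra_simps sum.distrib)

lemma wedge1_add: "wedge1 n f (\<lambda>S. u S + v S) T = wedge1 n f u T + wedge1 n f v T"
  by (simp add: wedge1_ext_sign distrib_left sum.distrib)

lemma contr_add: "contr n f (\<lambda>S. u S + v S) T = contr n f u T + contr n f v T"
  by (simp add: contr_ext_sign distrib_left sum.distrib)

lemma wedge1_smult: "wedge1 n f (\<lambda>S. a * u S) T = a * wedge1 n f u T"
  by (simp add: wedge1_ext_sign sum_distrib_left mult_ac)

lemma contr_smult: "contr n f (\<lambda>S. a * u S) T = a * contr n f u T"
  by (simp add: contr_ext_sign sum_distrib_left mult_ac)

lemma wedge1_zero: "wedge1 n f (\<lambda>S. 0) = (\<lambda>T. 0)"
  by (simp add: fun_eq_iff wedge1_ext_sign)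

lemma wedge1_sum: "wedge1 n (\<lambda>i. \<Sum>k<m. c k * F k i) v T = (\<Sum>k<m. c k * wedge1 n (F k) v T)"
proof -
  have "(\<Sum>i\<in>T. ext_sign T i * (\<Sum>k<m. c k * F k i) * v (T - {i}))
      = (\<Sum>i\<in>T. \<Sum>k<m. c k * (ext_sign T i * F k i * v (T - {i})))"
    by (simp add: sum_distrib_left sum_distrib_right mult_ac)
  also have "\<dots> = (\<Sum>k<m. \<Sum>i\<in>T. c k * (ext_sign T i * F k i * v (T - {i})))" by (rule sum.swap)
  finally show ?thesis by (simp add: wedge1_ext_sign sum_distrib_left)
qed

lemma contr_sum: "contr n (\<lambda>i. \<Sum>k<m. c k * F k i) v T = (\<Sum>k<m. c k * contr n (F k) v T)"
proof -
  have "(\<Sum>i\<in>{..<n} - T. ext_sign T i * (\<Sum>k<m. c k * F k i) * v (insert i T))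
      = (\<Sum>i\<in>{..<n} - T. \<Sum>k<m. c k * (ext_sign T i * F k i * v (insert i T)))"
    by (simp add: sum_distrib_left sum_distrib_right mult_ac)
  also have "\<dots> = (\<Sum>k<m. \<Sum>i\<in>{..<n} - T. c k * (ext_sign T i * F k i * v (insert i T)))"
    by (rule sum.swap)
  finally show ?thesis by (simp add: contr_ext_sign sum_distrib_left)
qed

lemma cliff_add: "cliff n x (\<lambda>S. u S + v S) = (\<lambda>T. cliff n x u T + cliff n x v T)"
  by (simp add: cliff_def wedge1_add contr_add fun_eq_iff algebra_simps)

lemma cliff_smult: "cliff n x (\<lambda>S. a * u S) = (\<lambda>T. a * cliff n x u T)"
  by (simp add: cliff_def wedge1_smult contr_smult fun_eq_iff algebra_simps)

lemma cliff_plc: "cliff n (plc c K m) v T = (\<Sum>k<m. c k * cliff n (K k) v T)"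
  by (simp add: cliff_def plc_def vlc_def wedge1_sum contr_sum distrib_left sum.distrib)

lemma cliff_in_ext_alg: "cliff n x w \<in> ext_alg n"
  by (simp add: cliff_def ext_alg_def wedge1_ext_sign contr_ext_sign)

lemma cliff_anticommute:
  assumes w: "w \<in> ext_alg n"
  shows "cliff n x (cliff n y w) T + cliff n y (cliff n x w) T = polar n x y * w T"
proof -
  have expand: "cliff n x (cliff n y w) T = wedge1 n (fst x) (wedge1 n (fst y) w) T
      + wedge1 n (fst x) (contr n (snd y) w) T
      + (contr n (snd x) (wedge1 n (fst y) w) T + contr n (snd x) (contr n (snd y) w) T)" for x y
    by (simp add: cliff_def wedge1_add contr_add)
  show ?thesis
    unfolding expand polar_def distrib_right
      contr_wedge1_anticommutator[OF w, symmetric]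
      wedge1_anticommute[of n "fst y"] contr_anticommute[of n "snd y"]
    by (simp add: algebra_simps)
qed

lemma half_mult_2_cancel:
  assumes half: "(2::'a::comm_ring_1) dvd 1" and "2 * a = 2 * (b::'a)"
  shows "a = b"
proof -
  obtain h :: 'a where h: "1 = 2 * h" using half by (auto elim!: dvdE)
  have "h * (2 * a) = h * (2 * b)" using assms by simp
  thus ?thesis using h by (simp add: mult.assoc[symmetric] mult.commute[of h])
qed

lemma cliff_square:
  assumes half: "(2::'a::comm_ring_1) dvd 1" and w: "w \<in> ext_alg n"
  shows "cliff n x (cliff n x w) T = Qform n x * (w T :: 'a)"
proof (rule half_mult_2_cancel[OF half])
  have "2 * cliff n x (cliff n x w) T = polar n x x * w T"
    unfolding mult_2 by (rule cliff_anticommute[OF w])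
  thus "2 * cliff n x (cliff n x w) T = 2 * (Qform n x * w T)"
    by (simp add: polar_self mult.assoc)
qed

text \<open>\<open>cliff_prod n K m w\<close> is the Clifford product \<open>K\<^sub>0 \<cdot> K\<^sub>1 \<cdots> K\<^bsub>m-1\<^esub> \<cdot> w\<close>.\<close>

fun cliff_prod :: "nat \<Rightarrow> (nat \<Rightarrow> (nat \<Rightarrow> 'a::comm_ring_1) \<times> (nat \<Rightarrow> 'a)) \<Rightarrow> nat
    \<Rightarrow> (nat set \<Rightarrow> 'a) \<Rightarrow> nat set \<Rightarrow> 'a" where
  "cliff_prod n K 0 w = w"
| "cliff_prod n K (Suc m) w = cliff_prod n K m (cliff n (K m) w)"

lemma cliff_prod_Suc_shift: "cliff_prod n K (Suc m) w = cliff n (K 0) (cliff_prod n (\<lambda>j. K (Suc j)) m w)"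
  by (induction m arbitrary: w) simp_all

lemma cliff_prod_add: "cliff_prod n K m (\<lambda>S. u S + v S) = (\<lambda>T. cliff_prod n K m u T + cliff_prod n K m v T)"
  by (induction m arbitrary: u v) (simp_all add: cliff_add)

lemma cliff_prod_smult: "cliff_prod n K m (\<lambda>S. a * u S) = (\<lambda>T. a * cliff_prod n K m u T)"
  by (induction m arbitrary: u) (simp_all add: cliff_smult)

lemma cliff_prod_in_ext_alg: "w \<in> ext_alg n \<Longrightarrow> cliff_prod n K m w \<in> ext_alg n"
  by (induction m arbitrary: w) (simp_all add: cliff_in_ext_alg)

lemma cliff_cliff_prod_anticommute:
  assumes "w \<in> ext_alg n" "\<forall>j<m. polar n x (K j) = 0"
  shows "cliff n x (cliff_prod n K m w) = (\<lambda>S. (-1) ^ m * cliff_prod n K m (cliff n x w) S)"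
  using assms
proof (induction m arbitrary: w)
  case 0 thus ?case by simp
next
  case (Suc m)
  have swap: "cliff n x (cliff n (K m) w) = (\<lambda>S. - cliff n (K m) (cliff n x w) S)"
    using cliff_anticommute[OF Suc.prems(1), of x "K m"] Suc.prems(2)
    by (auto simp: fun_eq_iff eq_neg_iff_add_eq_0)
  have "cliff n x (cliff_prod n K (Suc m) w) = (\<lambda>S. (-1) ^ m * cliff_prod n K m (cliff n x (cliff n (K m) w)) S)"
    using Suc.IH[OF cliff_in_ext_alg] Suc.prems(2) by simp
  also have "\<dots> = (\<lambda>S. (-1) ^ Suc m * cliff_prod n K (Suc m) (cliff n x w) S)"
    unfolding swap using cliff_prod_smult[of n K m "-1"] by simp
  finally show ?case .
qed

text \<open>Pairwise orthogonal isotropic factors square to zero and anticommute, so each of them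
  annihilates the product.\<close>

lemma cliff_factor_cliff_prod:
  assumes half: "(2::'a::comm_ring_1) dvd 1"
    and "w \<in> ext_alg n" "\<forall>i<m. \<forall>j<m. polar n (K i) (K j) = (0::'a)" "k < m"
  shows "cliff n (K k) (cliff_prod n K m w) = (\<lambda>S. 0)"
  using assms(2-)
proof (induction m arbitrary: w)
  case 0 thus ?case by simp
next
  case (Suc m)
  show ?case
  proof (cases "k < m")
    case True
    thus ?thesis using Suc.IH[OF cliff_in_ext_alg] Suc.prems(2) by simp
  next
    case False
    hence k: "k = m" using Suc.prems by simp
    have "Qform n (K m) = 0"
      using Suc.prems(2) half_mult_2_cancel[OF half, of "Qform n (K m)" 0] polar_self[of n "K m"] by simp
    hence square: "cliff n (K m) (cliff n (K m) w) = (\<lambda>S. 0)"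
      using cliff_square[OF half Suc.prems(1)] by (simp add: fun_eq_iff)
    have "cliff n (K m) (cliff_prod n K m (cliff n (K m) w))
        = (\<lambda>S. (-1) ^ m * cliff_prod n K m (cliff n (K m) (cliff n (K m) w)) S)"
      by (rule cliff_cliff_prod_anticommute[OF cliff_in_ext_alg]) (use Suc.prems in auto)
    thus ?thesis unfolding k square using cliff_prod_smult[of n K m 0 "\<lambda>S. 0"] by simp
  qed
qed

lemma cliff_plc_cliff_prod:
  assumes half: "(2::'a::comm_ring_1) dvd 1"
    and "w \<in> ext_alg n" "\<forall>i<m. \<forall>j<m. polar n (K i) (K j) = (0::'a)"
  shows "cliff n (plc c K m) (cliff_prod n K m w) = (\<lambda>S. 0)"
  using cliff_factor_cliff_prod[OF half assms(2,3)] by (simp add: fun_eq_iff cliff_plc)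

definition homogeneous :: "nat \<Rightarrow> (nat set \<Rightarrow> 'a::zero) \<Rightarrow> bool" where
  "homogeneous d v \<longleftrightarrow> (\<forall>S. card S \<noteq> d \<longrightarrow> v S = 0)"

definition vanishes_below :: "nat \<Rightarrow> (nat set \<Rightarrow> 'a::zero) \<Rightarrow> bool" where
  "vanishes_below k v \<longleftrightarrow> (\<forall>S. card S < k \<longrightarrow> v S = 0)"

lemma homogeneous_vanishes_below: "homogeneous d v \<Longrightarrow> vanishes_below d v"
  unfolding homogeneous_def vanishes_below_def by auto

lemma vanishes_below_mono: "vanishes_below k v \<Longrightarrow> k' \<le> k \<Longrightarrow> vanishes_below k' v"
  unfolding vanishes_below_def by auto

lemma wedge1_eq_0_if:
  assumes "\<And>i. finite T \<Longrightarrow> i \<in> T \<Longrightarrow> w (T - {i}) = 0"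
  shows "wedge1 n f w T = 0"
  using assms finite_subset[of T "{..<n}"] by (simp add: wedge1_ext_sign)

lemma contr_eq_0_if:
  assumes "\<And>i. finite T \<Longrightarrow> i \<notin> T \<Longrightarrow> w (insert i T) = 0"
  shows "contr n p w T = 0"
  using assms finite_subset[of T "{..<n}"] by (simp add: contr_ext_sign)

lemma wedge1_homogeneous:
  assumes "homogeneous d w"
  shows "homogeneous (Suc d) (wedge1 n f w)"
  unfolding homogeneous_def
proof (intro allI impI wedge1_eq_0_if)
  fix T :: "nat set" and i assume "card T \<noteq> Suc d" "finite T" "i \<in> T"
  moreover have "card T = Suc (card (T - {i}))" using \<open>finite T\<close> \<open>i \<in> T\<close> by (rule card_Suc_Diff1[symmetric])
  ultimately have "card (T - {i}) \<noteq> d" by linarith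
  thus "w (T - {i}) = 0" using assms unfolding homogeneous_def by blast
qed

lemma contr_homogeneous:
  assumes "homogeneous (Suc d) w"
  shows "homogeneous d (contr n p w)"
  unfolding homogeneous_def
proof (intro allI impI contr_eq_0_if)
  fix T :: "nat set" and i assume "card T \<noteq> d" "finite T" "i \<notin> T"
  hence "card (insert i T) \<noteq> Suc d" by simp
  thus "w (insert i T) = 0" using assms unfolding homogeneous_def by blast
qed

lemma wedge1_vanishes_below:
  assumes "vanishes_below k w"
  shows "vanishes_below (Suc k) (wedge1 n f w)"
  unfolding vanishes_below_def
proof (intro allI impI wedge1_eq_0_if)
  fix T :: "nat set" and i assume "card T < Suc k" "finite T" "i \<in> T"
  moreover have "card T = Suc (card (T - {i}))" using \<open>finite T\<close> \<open>i \<in> T\<close> by (rule card_Suc_Diff1[symmetric])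
  ultimately have "card (T - {i}) < k" by linarith
  thus "w (T - {i}) = 0" using assms unfolding vanishes_below_def by blast
qed

lemma contr_vanishes_below:
  assumes "vanishes_below (Suc k) w"
  shows "vanishes_below k (contr n p w)"
  unfolding vanishes_below_def
proof (intro allI impI contr_eq_0_if)
  fix T :: "nat set" and i assume "card T < k" "finite T" "i \<notin> T"
  hence "card (insert i T) < Suc k" by simp
  thus "w (insert i T) = 0" using assms unfolding vanishes_below_def by blast
qed

lemma cliff_vanishes_below:
  assumes "vanishes_below (Suc k) w"
  shows "vanishes_below k (cliff n x w)"
proof -
  have "vanishes_below k (wedge1 n (fst x) w)"
    by (rule vanishes_below_mono[OF wedge1_vanishes_below[OF assms]]) simp
  thus ?thesis using contr_vanishes_below[OF assms] unfolding vanishes_below_def cliff_def by simp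
qed

lemma cliff_prod_vanishes_below: "vanishes_below (m + k) w \<Longrightarrow> vanishes_below k (cliff_prod n K m w)"
  by (induction m arbitrary: w) (simp_all add: cliff_vanishes_below)

fun contr_prod :: "nat \<Rightarrow> (nat \<Rightarrow> (nat \<Rightarrow> 'a::comm_ring_1) \<times> (nat \<Rightarrow> 'a)) \<Rightarrow> nat
    \<Rightarrow> (nat set \<Rightarrow> 'a) \<Rightarrow> nat set \<Rightarrow> 'a" where
  "contr_prod n K 0 w = w"
| "contr_prod n K (Suc m) w = contr_prod n K m (contr n (snd (K m)) w)"

text \<open>On a homogeneous element the wedge parts of the factors raise the degree, so in low
  degrees only the contractions contribute.\<close>

lemma cliff_prod_low_degree:
  "homogeneous (m + d) w \<Longrightarrow> card S \<le> d \<Longrightarrow> cliff_prod n K m w S = contr_prod n K m w S"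
proof (induction m arbitrary: w)
  case 0 thus ?case by simp
next
  case (Suc m)
  have "vanishes_below (m + Suc d) (wedge1 n (fst (K m)) w)"
    by (rule vanishes_below_mono[OF wedge1_vanishes_below[OF homogeneous_vanishes_below[OF Suc.prems(1)]]]) simp
  hence wedge_part: "cliff_prod n K m (wedge1 n (fst (K m)) w) S = 0"
    using cliff_prod_vanishes_below[of m "Suc d" "wedge1 n (fst (K m)) w" n K] Suc.prems(2)
    unfolding vanishes_below_def by simp
  have "homogeneous (m + d) (contr n (snd (K m)) w)"
    using contr_homogeneous[of "m + d" w] Suc.prems(1) by simp
  hence "cliff_prod n K m (contr n (snd (K m)) w) S = contr_prod n K m (contr n (snd (K m)) w) S"
    using Suc.IH Suc.prems(2) by blast
  moreover have "cliff n (K m) w = (\<lambda>T. wedge1 n (fst (K m)) w T + contr n (snd (K m)) w T)"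
    by (simp add: cliff_def)
  ultimately show ?case using wedge_part by (simp add: cliff_prod_add)
qed

definition ext_one :: "nat set \<Rightarrow> 'a::comm_ring_1" where
  "ext_one S = (if S = {} then 1 else 0)"

text \<open>\<open>wedge_prod n f b m\<close> is \<open>f\<^bsub>m-1\<^esub> \<and> \<cdots> \<and> f\<^sub>0 \<and> b\<close>.\<close>

fun wedge_prod :: "nat \<Rightarrow> (nat \<Rightarrow> nat \<Rightarrow> 'a::comm_ring_1) \<Rightarrow> (nat set \<Rightarrow> 'a) \<Rightarrow> nat \<Rightarrow> nat set \<Rightarrow> 'a" where
  "wedge_prod n f b 0 = b"
| "wedge_prod n f b (Suc m) = wedge1 n (f m) (wedge_prod n f b m)"

lemma ext_one_in_ext_alg: "ext_one \<in> ext_alg n"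
  by (simp add: ext_alg_def ext_one_def)

lemma wedge_prod_in_ext_alg: "b \<in> ext_alg n \<Longrightarrow> wedge_prod n f b m \<in> ext_alg n"
  by (induction m) (auto simp: ext_alg_def wedge1_ext_sign)

lemma wedge_prod_ext_one_homogeneous: "homogeneous m (wedge_prod n f ext_one m)"
  by (induction m) (simp_all add: wedge1_homogeneous homogeneous_def[of 0] ext_one_def)

lemma contr_wedge1:
  assumes "w \<in> ext_alg n"
  shows "contr n p (wedge1 n f w) = (\<lambda>T. pairing n p f * w T - wedge1 n f (contr n p w) T)"
  using contr_wedge1_anticommutator[OF assms] by (simp add: fun_eq_iff algebra_simps)

lemma contr_wedge_prod_eq_0:
  assumes b: "b \<in> ext_alg n" "contr n p b = (\<lambda>T. 0)" and orth: "\<forall>j<m. pairing n p (f j) = 0"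
  shows "contr n p (wedge_prod n f b m) = (\<lambda>T. 0)"
  using orth
proof (induction m)
  case 0 thus ?case using b by simp
next
  case (Suc m)
  thus ?case using contr_wedge1[OF wedge_prod_in_ext_alg[OF b(1)], of p "f m" f m]
    by (simp add: wedge1_zero)
qed

lemma contr_prod_wedge_prod:
  assumes b: "b \<in> ext_alg n" "\<forall>j<m. contr n (snd (K j)) b = (\<lambda>T. 0)"
    and dual: "\<forall>j<m. \<forall>i\<le>j. pairing n (snd (K j)) (f i) = (if i = j then 1 else 0)"
  shows "contr_prod n K m (wedge_prod n f b m) = b"
  using b(2) dual
proof (induction m)
  case 0 thus ?case by simp
next
  case (Suc m)
  have "contr n (snd (K m)) (wedge_prod n f b m) = (\<lambda>T. 0)"
    by (rule contr_wedge_prod_eq_0[OF b(1)]) (use Suc.prems in auto)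
  hence "contr n (snd (K m)) (wedge_prod n f b (Suc m)) = wedge_prod n f b m"
    using contr_wedge1[OF wedge_prod_in_ext_alg[OF b(1)], of "snd (K m)" "f m" f m] Suc.prems(2)
    by (simp add: wedge1_zero)
  thus ?case using Suc by simp
qed

lemma cliff_prod_wedge_prod_empty:
  assumes "\<forall>j<m. \<forall>i\<le>j. pairing n (snd (K j)) (f i) = (if i = j then 1 else 0)"
  shows "cliff_prod n K m (wedge_prod n f ext_one m) {} = 1"
proof -
  have "cliff_prod n K m (wedge_prod n f ext_one m) {} = contr_prod n K m (wedge_prod n f ext_one m) {}"
    by (rule cliff_prod_low_degree[where d = 0]) (use wedge_prod_ext_one_homogeneous in auto)
  also have "contr_prod n K m (wedge_prod n f ext_one m) = ext_one"
    by (rule contr_prod_wedge_prod[OF ext_one_in_ext_alg _ assms])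
      (simp add: fun_eq_iff contr_ext_sign ext_one_def)
  also have "ext_one {} = (1::'a)" by (simp add: ext_one_def)
  finally show ?thesis .
qed

lemma cliff_singleton_snd_0:
  assumes "k < n" "snd x = (\<lambda>_. 0)"
  shows "cliff n x y {k} = fst x k * y {}"
proof -
  have none_below: "{j. j = k \<and> j < k} = {}" by auto
  show ?thesis
    using assms unfolding cliff_def wedge1_ext_sign contr_ext_sign ext_sign_def by (simp add: none_below)
qed

definition std_basis :: "nat \<Rightarrow> nat \<Rightarrow> 'a::comm_ring_1" where
  "std_basis i = (\<lambda>k. if k = i then 1 else 0)"

lemma pair_fun_eqI:
  "(\<And>i. fst x i = fst y i) \<Longrightarrow> (\<And>i. snd x i = snd y i) \<Longrightarrow> x = (y :: (nat \<Rightarrow> 'a) \<times> (nat \<Rightarrow> 'a))"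
  by (simp add: prod_eq_iff fun_eq_iff)

lemma fst_plc [simp]: "fst (plc c K m) i = (\<Sum>k<m. c k * fst (K k) i)"
  by (simp add: plc_def vlc_def)

lemma snd_plc [simp]: "snd (plc c K m) i = (\<Sum>k<m. c k * snd (K k) i)"
  by (simp add: plc_def vlc_def)

lemma fst_padd [simp]: "fst (padd x y) i = fst x i + fst y i"
  by (simp add: padd_def)

lemma snd_padd [simp]: "snd (padd x y) i = snd x i + snd y i"
  by (simp add: padd_def)

lemma fst_psmul [simp]: "fst (psmul r x) i = r * fst x i"
  by (simp add: psmul_def)

lemma snd_psmul [simp]: "snd (psmul r x) i = r * snd x i"
  by (simp add: psmul_def)

lemma fst_pzero [simp]: "fst pzero i = 0"
  by (simp add: pzero_def)

lemma snd_pzero [simp]: "snd pzero i = 0"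
  by (simp add: pzero_def)

lemma plc_0: "plc c K 0 = pzero"
  by (rule pair_fun_eqI) simp_all

lemma plc_Suc: "plc c K (Suc m) = padd (plc c K m) (psmul (c m) (K m))"
  by (rule pair_fun_eqI) simp_all

lemma plc_cong: "(\<And>k. k < m \<Longrightarrow> c k = d k) \<Longrightarrow> (\<And>k. k < m \<Longrightarrow> K k = K' k) \<Longrightarrow> plc c K m = plc d K' m"
  by (rule pair_fun_eqI) simp_all

lemma plc_single: "k < m \<Longrightarrow> plc (\<lambda>l. if l = k then a else 0) K m = psmul a (K k)"
  by (rule pair_fun_eqI) (simp_all add: if_distrib[of "\<lambda>t. t * _"] cong: if_cong)

lemma plc_unit: "k < m \<Longrightarrow> plc (\<lambda>l. if l = k then 1 else 0) K m = K k"
  by (rule pair_fun_eqI) (simp_all add: if_distrib[of "\<lambda>t. t * _"] cong: if_cong)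

lemma plc_plc: "plc c (\<lambda>k. plc (d k) G m) n = plc (\<lambda>l. \<Sum>k<n. c k * d k l) G m"
proof (rule pair_fun_eqI)
  fix i
  have "(\<Sum>k<n. c k * (\<Sum>l<m. d k l * fst (G l) i)) = (\<Sum>l<m. \<Sum>k<n. c k * d k l * fst (G l) i)"
    by (simp add: sum_distrib_left mult.assoc sum.swap[of _ "{..<n}"])
  thus "fst (plc c (\<lambda>k. plc (d k) G m) n) i = fst (plc (\<lambda>l. \<Sum>k<n. c k * d k l) G m) i"
    by (simp add: sum_distrib_right)
next
  fix i
  have "(\<Sum>k<n. c k * (\<Sum>l<m. d k l * snd (G l) i)) = (\<Sum>l<m. \<Sum>k<n. c k * d k l * snd (G l) i)"
    by (simp add: sum_distrib_left mult.assoc sum.swap[of _ "{..<n}"])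
  thus "snd (plc c (\<lambda>k. plc (d k) G m) n) i = snd (plc (\<lambda>l. \<Sum>k<n. c k * d k l) G m) i"
    by (simp add: sum_distrib_right)
qed

lemma plc_in_submod:
  assumes "is_submod n M" "\<forall>k<m. K k \<in> M"
  shows "plc c K m \<in> M"
  using assms(2)
proof (induction m)
  case 0 thus ?case using assms(1) by (simp add: plc_0 is_submod_def)
next
  case (Suc m)
  thus ?case using assms(1) unfolding plc_Suc is_submod_def by simp
qed

definition spanned_by :: "((nat \<Rightarrow> 'a::comm_ring_1) \<times> (nat \<Rightarrow> 'a)) set
    \<Rightarrow> (nat \<Rightarrow> (nat \<Rightarrow> 'a) \<times> (nat \<Rightarrow> 'a)) \<Rightarrow> nat \<Rightarrow> bool" where
  "spanned_by M K m \<longleftrightarrow> (\<forall>k<m. K k \<in> M) \<and> (\<forall>x\<in>M. \<exists>c. x = plc c K m)"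

lemma pbasis_spanned_by: "is_pbasis M n b \<Longrightarrow> spanned_by M b n"
  unfolding is_pbasis_def spanned_by_def by metis

lemma spanned_by_trans:
  assumes "spanned_by M b n" "\<forall>k<m. K k \<in> M" "\<forall>k<n. \<exists>d. b k = plc d K m"
  shows "spanned_by M K m"
  unfolding spanned_by_def
proof (intro conjI ballI)
  fix x assume "x \<in> M"
  then obtain c where c: "x = plc c b n" using assms(1) unfolding spanned_by_def by blast
  obtain d where "\<forall>k<n. b k = plc (d k) K m" using assms(3) by metis
  hence "plc c b n = plc c (\<lambda>k. plc (d k) K m) n" by (intro plc_cong) simp_all
  thus "\<exists>c. x = plc c K m" unfolding c plc_plc by blast
qed (use assms(2) in blast)

definition pfunctional :: "nat \<Rightarrow> (nat \<Rightarrow> 'a::comm_ring_1) \<Rightarrow> (nat \<Rightarrow> 'a) \<Rightarrow> (nat \<Rightarrow> 'a) \<times> (nat \<Rightarrow> 'a) \<Rightarrow> 'a" where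
  "pfunctional n l1 l2 v = (\<Sum>i<n. l1 i * fst v i + l2 i * snd v i)"

lemma pfunctional_plc: "pfunctional n l1 l2 (plc c K m) = (\<Sum>k<m. c k * pfunctional n l1 l2 (K k))"
proof -
  have "pfunctional n l1 l2 (plc c K m) = (\<Sum>i<n. \<Sum>k<m. c k * (l1 i * fst (K k) i + l2 i * snd (K k) i))"
    by (simp add: pfunctional_def sum_distrib_left sum.distrib algebra_simps)
  also have "\<dots> = (\<Sum>k<m. \<Sum>i<n. c k * (l1 i * fst (K k) i + l2 i * snd (K k) i))" by (rule sum.swap)
  finally show ?thesis by (simp add: pfunctional_def sum_distrib_left)
qed

lemma polar_eq_0_if_isotropic:
  assumes "totally_isotropic n M" "is_submod n M" "x \<in> M" "y \<in> M"
  shows "polar n x y = 0"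
proof -
  have "padd x y \<in> M" using assms(2-) unfolding is_submod_def by blast
  thus ?thesis using assms Qform_padd[of n x y] unfolding totally_isotropic_def by simp
qed

section \<open>Direct summands\<close>

lemma direct_summand_decomp_unique:
  assumes M: "is_submod n M" and N: "is_submod n N" and MN: "M \<inter> N = {pzero}"
    and "x \<in> M" "y \<in> M" "k \<in> N" "k' \<in> N" and eq: "padd x k = padd y k'"
  shows "x = y"
proof -
  let ?d = "padd x (psmul (-1) y)"
  have "?d \<in> M" using M assms(4,5) unfolding is_submod_def by blast
  moreover have "?d = padd k' (psmul (-1) k)"
  proof (rule pair_fun_eqI)
    fix i
    show "fst ?d i = fst (padd k' (psmul (-1) k)) i"
      using arg_cong[OF eq, of "\<lambda>p. fst p i"] by (simp add: algebra_simps)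
    show "snd ?d i = snd (padd k' (psmul (-1) k)) i"
      using arg_cong[OF eq, of "\<lambda>p. snd p i"] by (simp add: algebra_simps)
  qed
  moreover have "padd k' (psmul (-1) k) \<in> N" using N assms(6,7) unfolding is_submod_def by blast
  ultimately have "?d = pzero" using MN by auto
  thus ?thesis
    by (intro pair_fun_eqI) (simp_all add: fun_eq_iff prod_eq_iff padd_def psmul_def pzero_def)
qed

definition summand_coords :: "nat \<Rightarrow> ((nat \<Rightarrow> 'a::comm_ring_1) \<times> (nat \<Rightarrow> 'a)) set
    \<Rightarrow> (nat \<Rightarrow> (nat \<Rightarrow> 'a) \<times> (nat \<Rightarrow> 'a)) \<Rightarrow> (nat \<Rightarrow> 'a) \<times> (nat \<Rightarrow> 'a) \<Rightarrow> (nat \<Rightarrow> 'a) \<Rightarrow> bool" where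
  "summand_coords n N b v c \<longleftrightarrow> (\<forall>k\<ge>n. c k = 0) \<and> (\<exists>k\<in>N. v = padd (plc c b n) k)"

lemma summand_coords_exists:
  assumes "is_direct_summand n M" "is_pbasis M n b"
  shows "\<exists>N. is_submod n N \<and> M \<inter> N = {pzero} \<and> (\<forall>v\<in>HHcar n. \<exists>c. summand_coords n N b v c)"
proof -
  obtain N where N: "is_submod n N" "M \<inter> N = {pzero}" "\<forall>x\<in>HHcar n. \<exists>m\<in>M. \<exists>k\<in>N. x = padd m k"
    using assms(1) unfolding is_direct_summand_def by blast
  have "\<exists>c. summand_coords n N b v c" if v: "v \<in> HHcar n" for v
  proof -
    obtain m k where mk: "m \<in> M" "k \<in> N" "v = padd m k" using N(3) v by blast
    obtain c where "(\<forall>k\<ge>n. c k = 0) \<and> m = plc c b n" using assms(2) mk(1) unfolding is_pbasis_def by blast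
    thus ?thesis unfolding summand_coords_def using mk by blast
  qed
  thus ?thesis using N(1,2) by blast
qed

lemma summand_coords_unique:
  assumes M: "is_submod n M" and N: "is_submod n N" "M \<inter> N = {pzero}" and basis: "is_pbasis M n b"
    and c: "summand_coords n N b v c" and c': "summand_coords n N b v c'"
  shows "c = c'"
proof -
  obtain k k' where kN: "k \<in> N" "k' \<in> N" and eq: "padd (plc c b n) k = padd (plc c' b n) k'"
    and vanish: "\<forall>k\<ge>n. c k = 0" "\<forall>k\<ge>n. c' k = 0" using c c' unfolding summand_coords_def by auto
  have "\<forall>k<n. b k \<in> M" using basis unfolding is_pbasis_def by blast
  hence cM: "plc c b n \<in> M" "plc c' b n \<in> M" using plc_in_submod[OF M] by auto
  have "plc c b n = plc c' b n" by (rule direct_summand_decomp_unique[OF M N cM kN eq])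
  moreover have "\<exists>!d. (\<forall>k\<ge>n. d k = 0) \<and> plc c b n = plc d b n"
    using basis cM(1) unfolding is_pbasis_def by blast
  ultimately show "c = c'" using vanish by blast
qed

lemma summand_coords_padd:
  assumes N: "is_submod n N" and "summand_coords n N b v c" "summand_coords n N b w c'"
  shows "summand_coords n N b (padd v w) (\<lambda>j. c j + c' j)"
proof -
  obtain k k' where "k \<in> N" "v = padd (plc c b n) k" "k' \<in> N" "w = padd (plc c' b n) k'"
    and "\<forall>k\<ge>n. c k = 0" "\<forall>k\<ge>n. c' k = 0" using assms(2,3) unfolding summand_coords_def by auto
  moreover from this have "padd v w = padd (plc (\<lambda>j. c j + c' j) b n) (padd k k')"
    by (intro pair_fun_eqI) (simp_all add: algebra_simps sum.distrib)
  moreover have "padd k k' \<in> N" using N \<open>k \<in> N\<close> \<open>k' \<in> N\<close> unfolding is_submod_def by blast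
  ultimately show ?thesis unfolding summand_coords_def by auto
qed

lemma summand_coords_psmul:
  assumes N: "is_submod n N" and "summand_coords n N b v c"
  shows "summand_coords n N b (psmul r v) (\<lambda>j. r * c j)"
proof -
  obtain k where "k \<in> N" "v = padd (plc c b n) k" "\<forall>k\<ge>n. c k = 0"
    using assms(2) unfolding summand_coords_def by blast
  moreover from this have "psmul r v = padd (plc (\<lambda>j. r * c j) b n) (psmul r k)"
    by (intro pair_fun_eqI) (simp_all add: algebra_simps sum_distrib_left)
  moreover have "psmul r k \<in> N" using N \<open>k \<in> N\<close> unfolding is_submod_def by blast
  ultimately show ?thesis unfolding summand_coords_def by auto
qed

lemma summand_coords_basis:
  assumes N: "is_submod n N" and "k < n"
  shows "summand_coords n N b (b k) (\<lambda>j. if j = k then 1 else 0)"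
proof -
  have "b k = padd (plc (\<lambda>j. if j = k then 1 else 0::'a) b n) pzero"
    unfolding plc_unit[OF assms(2)] by (rule pair_fun_eqI) simp_all
  thus ?thesis unfolding summand_coords_def using assms unfolding is_submod_def by auto
qed

text \<open>The coordinate functions of a basis of a direct summand extend to linear forms on
  \<open>H \<oplus> H\<^sup>*\<close>: decompose the unit vectors of \<open>H \<oplus> H\<^sup>*\<close> along a complement.\<close>

lemma direct_summand_coordinate_functionals:
  fixes M :: "((nat \<Rightarrow> 'a::comm_ring_1) \<times> (nat \<Rightarrow> 'a)) set"
  assumes summand: "is_direct_summand n M" and basis: "is_pbasis M n b"
  shows "\<exists>L1 L2. \<forall>j<n. \<forall>k<n. pfunctional n (L1 j) (L2 j) (b k) = (if j = k then 1 else 0)"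
proof -
  have Msub: "is_submod n M" using summand unfolding is_direct_summand_def by blast
  obtain N where N: "is_submod n N" "M \<inter> N = {pzero}" and coords: "\<forall>v\<in>HHcar n. \<exists>c. summand_coords n N b v c"
    using summand_coords_exists[OF summand basis] by blast
  define E1 :: "nat \<Rightarrow> (nat \<Rightarrow> 'a) \<times> (nat \<Rightarrow> 'a)" where "E1 i = (std_basis i, \<lambda>j. 0)" for i
  define E2 :: "nat \<Rightarrow> (nat \<Rightarrow> 'a) \<times> (nat \<Rightarrow> 'a)" where "E2 i = (\<lambda>j. 0, std_basis i)" for i
  define c1 where "c1 i = (SOME c. summand_coords n N b (E1 i) c)" for i
  define c2 where "c2 i = (SOME c. summand_coords n N b (E2 i) c)" for i
  have units: "summand_coords n N b (E1 i) (c1 i)" "summand_coords n N b (E2 i) (c2 i)" if "i < n" for i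
  proof -
    have "E1 i \<in> HHcar n" "E2 i \<in> HHcar n" using that by (auto simp: E1_def E2_def HHcar_def Hcar_def std_basis_def)
    hence ex: "\<exists>c. summand_coords n N b (E1 i) c" "\<exists>c. summand_coords n N b (E2 i) c"
      using coords by blast+
    show "summand_coords n N b (E1 i) (c1 i)" unfolding c1_def by (rule someI_ex[OF ex(1)])
    show "summand_coords n N b (E2 i) (c2 i)" unfolding c2_def by (rule someI_ex[OF ex(2)])
  qed
  define vpart :: "nat \<Rightarrow> (nat \<Rightarrow> 'a) \<times> (nat \<Rightarrow> 'a) \<Rightarrow> (nat \<Rightarrow> 'a) \<times> (nat \<Rightarrow> 'a)"
    where "vpart m v = ((\<lambda>j. if j < m then fst v j else 0), (\<lambda>j. if j < m then snd v j else 0))" for m v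
  have vpart: "summand_coords n N b (vpart m v) (\<lambda>j. \<Sum>i<m. fst v i * c1 i j + snd v i * c2 i j)"
    if "m \<le> n" for m v
    using that
  proof (induction m)
    case 0
    have "vpart 0 v = padd (plc (\<lambda>j. 0) b n) pzero" by (rule pair_fun_eqI) (simp_all add: vpart_def)
    thus ?case using N(1) unfolding summand_coords_def is_submod_def by auto
  next
    case (Suc m)
    have "vpart (Suc m) v = padd (vpart m v) (padd (psmul (fst v m) (E1 m)) (psmul (snd v m) (E2 m)))"
      by (rule pair_fun_eqI) (auto simp: vpart_def E1_def E2_def std_basis_def less_Suc_eq)
    moreover have "summand_coords n N b (padd (vpart m v) (padd (psmul (fst v m) (E1 m)) (psmul (snd v m) (E2 m))))
        (\<lambda>j. (\<Sum>i<m. fst v i * c1 i j + snd v i * c2 i j) + (fst v m * c1 m j + snd v m * c2 m j))"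
      using Suc by (intro summand_coords_padd[OF N(1)] summand_coords_psmul[OF N(1)] units) auto
    ultimately show ?case by (simp add: add_ac)
  qed
  have "pfunctional n (\<lambda>i. c1 i j) (\<lambda>i. c2 i j) (b k) = (if j = k then 1 else 0)" if jk: "j < n" "k < n" for j k
  proof -
    have "b k \<in> HHcar n" using basis jk Msub unfolding is_pbasis_def is_submod_def by blast
    hence "vpart n (b k) = b k" by (intro pair_fun_eqI) (auto simp: vpart_def HHcar_def Hcar_def)
    hence "summand_coords n N b (b k) (\<lambda>j. \<Sum>i<n. fst (b k) i * c1 i j + snd (b k) i * c2 i j)"
      using vpart[of n "b k"] by simp
    hence "(\<lambda>j. \<Sum>i<n. fst (b k) i * c1 i j + snd (b k) i * c2 i j) = (\<lambda>j. if j = k then 1 else 0)"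
      using summand_coords_basis[OF N(1) jk(2)] by (rule summand_coords_unique[OF Msub N basis])
    from fun_cong[OF this, of j] show ?thesis unfolding pfunctional_def by (simp add: mult.commute)
  qed
  thus ?thesis by (intro exI[of _ "\<lambda>j i. c1 i j"] exI[of _ "\<lambda>j i. c2 i j"]) simp
qed

definition fun_mat :: "nat \<Rightarrow> (nat \<Rightarrow> nat \<Rightarrow> 'a) \<Rightarrow> 'a mat" where
  "fun_mat n C = mat n n (\<lambda>(i,j). C i j)"

lemma fun_mat_carrier [simp]: "fun_mat n C \<in> carrier_mat n n"
  by (simp add: fun_mat_def)

lemma fun_mat_index [simp]: "i < n \<Longrightarrow> j < n \<Longrightarrow> fun_mat n C $$ (i,j) = C i j"
  by (simp add: fun_mat_def)

lemma fun_mat_mult: "fun_mat n C * fun_mat n D = fun_mat n (\<lambda>i j. \<Sum>k<n. C i k * (D k j :: 'a::comm_ring_1))"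
  by (rule eq_matI) (auto simp: fun_mat_def scalar_prod_def atLeast0LessThan intro!: sum.cong)

lemma fun_mat_one: "fun_mat n (\<lambda>i j. if i = j then 1 else 0) = (1\<^sub>m n :: 'a::comm_ring_1 mat)"
  by (rule eq_matI) (auto simp: fun_mat_def)

lemma fun_mat_inverse_iff:
  "fun_mat n C * fun_mat n D = 1\<^sub>m n \<longleftrightarrow>
     (\<forall>i<n. \<forall>j<n. (\<Sum>k<n. C i k * D k j) = (if i = j then 1 else (0::'a::comm_ring_1)))"
  unfolding fun_mat_mult fun_mat_one[symmetric]
proof
  assume eq: "fun_mat n (\<lambda>i j. \<Sum>k<n. C i k * D k j) = fun_mat n (\<lambda>i j. if i = j then 1 else 0)"
  show "\<forall>i<n. \<forall>j<n. (\<Sum>k<n. C i k * D k j) = (if i = j then 1 else 0)"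
  proof (intro allI impI)
    fix i j assume "i < n" "j < n"
    thus "(\<Sum>k<n. C i k * D k j) = (if i = j then 1 else 0)"
      using arg_cong[OF eq, of "\<lambda>A. A $$ (i, j)"] by simp
  qed
qed (intro eq_matI, auto simp: fun_mat_def)

lemma detk_eq_det: "detk k A = det (fun_mat k A)"
proof -
  have "det (fun_mat k A) = (\<Sum>p\<in>{p. p permutes {0..<k}}. signof p * (\<Prod>i=0..<k. fun_mat k A $$ (i, p i)))"
    by (rule det_def'[OF fun_mat_carrier])
  also have "\<dots> = (\<Sum>p\<in>{p. p permutes {..<k}}. of_int (sign p) * (\<Prod>i<k. A i (p i)))"
  proof (rule sum.cong)
    fix p assume "p \<in> {p. p permutes {..<k}}"
    hence "\<And>x. x < k \<Longrightarrow> p x < k" using permutes_in_image by fastforce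
    hence "(\<Prod>i=0..<k. fun_mat k A $$ (i, p i)) = (\<Prod>i<k. A i (p i))"
      by (intro prod.cong) (auto simp: atLeast0LessThan)
    thus "signof p * (\<Prod>i=0..<k. fun_mat k A $$ (i, p i)) = of_int (sign p) * (\<Prod>i<k. A i (p i))" by simp
  qed (simp add: atLeast0LessThan)
  finally show ?thesis by (simp add: detk_def)
qed

lemma smult_smult_mat: "a \<cdot>\<^sub>m (b \<cdot>\<^sub>m A) = (a * b :: 'a::comm_ring_1) \<cdot>\<^sub>m A"
  by (rule eq_matI) (auto simp: mult.assoc)

lemma one_smult_mat: "(1::'a::comm_ring_1) \<cdot>\<^sub>m A = A"
  by (rule eq_matI) auto

lemma unit_det_inverse_mat:
  fixes A :: "'a::comm_ring_1 mat"
  assumes A: "A \<in> carrier_mat n n" and unit: "det A dvd 1"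
  shows "\<exists>B\<in>carrier_mat n n. A * B = 1\<^sub>m n \<and> B * A = 1\<^sub>m n"
proof -
  obtain d where d: "det A * d = 1" using unit by (metis dvdE)
  let ?B = "d \<cdot>\<^sub>m adj_mat A"
  have "A * ?B = d \<cdot>\<^sub>m (A * adj_mat A)" by (rule mult_smult_distrib[OF A adj_mat(1)[OF A]])
  also have "\<dots> = 1\<^sub>m n" unfolding adj_mat(2)[OF A] smult_smult_mat using d by (simp add: mult.commute one_smult_mat)
  finally have "A * ?B = 1\<^sub>m n" .
  moreover have "?B * A = d \<cdot>\<^sub>m (adj_mat A * A)" by (rule mult_smult_assoc_mat[OF adj_mat(1)[OF A] A])
  moreover have "\<dots> = 1\<^sub>m n" unfolding adj_mat(3)[OF A] smult_smult_mat using d by (simp add: mult.commute one_smult_mat)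
  ultimately show ?thesis using adj_mat(1)[OF A] by (intro bexI[of _ ?B]) auto
qed

lemma mat_right_inverse_comm:
  fixes A B :: "'a::comm_ring_1 mat"
  assumes A: "A \<in> carrier_mat n n" and B: "B \<in> carrier_mat n n" and AB: "A * B = 1\<^sub>m n"
  shows "B * A = 1\<^sub>m n" "det A * det B = 1"
proof -
  show det: "det A * det B = 1" using det_mult[OF A B] AB by simp
  hence "det A dvd 1" by (rule dvdI[OF sym])
  then obtain C where C: "C \<in> carrier_mat n n" "C * A = 1\<^sub>m n"
    using unit_det_inverse_mat[OF A] by blast
  have "C = C * (A * B)" using AB C by simp
  also have "\<dots> = B" using A B C by (simp add: assoc_mult_mat[symmetric, of C n n A n B n])
  finally show "B * A = 1\<^sub>m n" using C by simp
qed

lemma sum_inverse_commute: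
  fixes C D :: "nat \<Rightarrow> nat \<Rightarrow> 'a::comm_ring_1"
  assumes "\<forall>i<n. \<forall>j<n. (\<Sum>k<n. C i k * D k j) = (if i = j then 1 else 0)"
  shows "\<forall>i<n. \<forall>j<n. (\<Sum>k<n. D i k * C k j) = (if i = j then 1 else 0)"
  using mat_right_inverse_comm(1)[OF fun_mat_carrier fun_mat_carrier] assms
  unfolding fun_mat_inverse_iff[symmetric] by blast

lemma inverse_unit_det:
  fixes C D :: "nat \<Rightarrow> nat \<Rightarrow> 'a::comm_ring_1"
  assumes "\<forall>i<n. \<forall>j<n. (\<Sum>k<n. C i k * D k j) = (if i = j then 1 else 0)"
  shows "det (fun_mat n C) dvd 1"
  using mat_right_inverse_comm(2)[OF fun_mat_carrier fun_mat_carrier] assms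
  unfolding fun_mat_inverse_iff[symmetric] by (blast intro: dvdI[OF sym])

lemma local_ring_zero_neq_one: "local_ring TYPE('a::comm_ring_1) \<Longrightarrow> (0::'a) \<noteq> 1"
  unfolding local_ring_def by blast

lemma local_ring_unit_add:
  "local_ring TYPE('a::comm_ring_1) \<Longrightarrow> (a + b :: 'a) dvd 1 \<Longrightarrow> a dvd 1 \<or> b dvd 1"
  unfolding local_ring_def by blast

lemma local_ring_unit_sum:
  assumes local: "local_ring TYPE('a::comm_ring_1)" and "finite F" and "(\<Sum>x\<in>F. f x :: 'a) dvd 1"
  shows "\<exists>x\<in>F. f x dvd 1"
  using assms(2,3)
proof (induction F rule: finite_induct)
  case empty thus ?case using local_ring_zero_neq_one[OF local] by simp
next
  case (insert x F)
  hence "f x dvd 1 \<or> (\<Sum>x\<in>F. f x) dvd 1" using local_ring_unit_add[OF local] by simp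
  thus ?case using insert by blast
qed

lemma local_ring_nonunit_add_mult:
  assumes local: "local_ring TYPE('a::comm_ring_1)" and "\<not> a dvd 1" "\<not> d dvd (1::'a)"
  shows "\<not> (a * b + c * d) dvd 1"
proof
  assume "(a * b + c * d) dvd 1"
  hence "a * b dvd 1 \<or> c * d dvd 1" by (rule local_ring_unit_add[OF local])
  hence "a dvd 1 \<or> d dvd 1" using dvd_mult_left dvd_mult_right by blast
  thus False using assms(2,3) by blast
qed

lemma ideal_gen_eq_UNIV_iff:
  assumes local: "local_ring TYPE('a::comm_ring_1)"
  shows "ideal_gen G = UNIV \<longleftrightarrow> (\<exists>g\<in>G. g dvd (1::'a))"
proof
  assume "ideal_gen G = UNIV"
  then obtain F c where "finite F" "F \<subseteq> G" "1 = (\<Sum>g\<in>F. c g * g)"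
    unfolding ideal_gen_def by blast
  then obtain g where "g \<in> F" "c g * g dvd 1"
    using local_ring_unit_sum[OF local, of F "\<lambda>g. c g * g"] by auto
  moreover from this have "g dvd 1" by (blast intro: dvd_mult_right)
  ultimately show "\<exists>g\<in>G. g dvd 1" using \<open>F \<subseteq> G\<close> by blast
next
  assume "\<exists>g\<in>G. g dvd 1"
  then obtain g v where g: "g \<in> G" "1 = g * v" by (auto elim: dvdE)
  have "x \<in> ideal_gen G" for x
  proof -
    have "(\<Sum>h\<in>{g}. (x * v) * h) = x * (g * v)" by (simp add: mult_ac)
    hence "x = (\<Sum>h\<in>{g}. (x * v) * h)" using g(2) by simp
    thus ?thesis unfolding ideal_gen_def using g(1)
      by (intro CollectI exI[of _ "{g}"] exI[of _ "\<lambda>h. x * v"]) simp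
  qed
  thus "ideal_gen G = UNIV" by blast
qed

lemma local_ring_unit_minor_row:
  assumes local: "local_ring TYPE('a::comm_ring_1)" and A: "(A::'a mat) \<in> carrier_mat n n"
    and i: "i < n" and unit: "det A dvd 1"
  shows "\<exists>j<n. det (mat_delete A i j) dvd 1"
proof -
  have "(\<Sum>j<n. A $$ (i,j) * cofactor A i j) dvd 1" using laplace_expansion_row[OF A i] unit by simp
  then obtain j where "j < n" "A $$ (i,j) * cofactor A i j dvd 1"
    using local_ring_unit_sum[OF local, of "{..<n}" "\<lambda>j. A $$ (i,j) * cofactor A i j"] by blast
  hence "(-1) ^ (i + j) * det (mat_delete A i j) dvd 1" unfolding cofactor_def by (blast intro: dvd_mult_right)
  hence "det (mat_delete A i j) dvd 1" by (rule dvd_mult_right)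
  thus ?thesis using \<open>j < n\<close> by blast
qed

lemma local_ring_unit_minor_col:
  assumes local: "local_ring TYPE('a::comm_ring_1)" and A: "(A::'a mat) \<in> carrier_mat n n"
    and j: "j < n" and unit: "det A dvd 1"
  shows "\<exists>i<n. det (mat_delete A i j) dvd 1"
proof -
  have "(\<Sum>i<n. A $$ (i,j) * cofactor A i j) dvd 1" using laplace_expansion_column[OF A j] unit by simp
  then obtain i where "i < n" "A $$ (i,j) * cofactor A i j dvd 1"
    using local_ring_unit_sum[OF local, of "{..<n}" "\<lambda>i. A $$ (i,j) * cofactor A i j"] by blast
  hence "(-1) ^ (i + j) * det (mat_delete A i j) dvd 1" unfolding cofactor_def by (blast intro: dvd_mult_right)
  hence "det (mat_delete A i j) dvd 1" by (rule dvd_mult_right)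
  thus ?thesis using \<open>i < n\<close> by blast
qed

lemma direct_summand_basis_change:
  fixes M :: "((nat \<Rightarrow> 'a::comm_ring_1) \<times> (nat \<Rightarrow> 'a)) set"
  assumes summand: "is_direct_summand n M" and basis: "is_pbasis M n b"
    and C: "\<forall>k<n. b k = plc (C k) G n"
  shows "\<exists>D. (\<forall>l<n. G l = plc (D l) b n) \<and> (\<forall>k<n. \<forall>j<n. (\<Sum>l<n. C k l * D l j) = (if k = j then 1 else 0))"
proof -
  obtain L1 L2 where L: "\<forall>j<n. \<forall>k<n. pfunctional n (L1 j) (L2 j) (b k) = (if j = k then 1 else 0)"
    using direct_summand_coordinate_functionals[OF summand basis] by blast
  define D where "D l j = pfunctional n (L1 j) (L2 j) (G l)" for l j
  have CD: "\<forall>k<n. \<forall>j<n. (\<Sum>l<n. C k l * D l j) = (if k = j then 1 else 0)"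
  proof (intro allI impI)
    fix k j assume "k < n" "j < n"
    moreover from this have "pfunctional n (L1 j) (L2 j) (b k) = (\<Sum>l<n. C k l * D l j)"
      unfolding D_def using C by (simp add: pfunctional_plc)
    ultimately show "(\<Sum>l<n. C k l * D l j) = (if k = j then 1 else 0)" using L by auto
  qed
  have DC: "\<forall>l<n. \<forall>j<n. (\<Sum>k<n. D l k * C k j) = (if l = j then 1 else 0)"
    using sum_inverse_commute[OF CD] .
  have "G l = plc (D l) b n" if "l < n" for l
  proof -
    have "plc (D l) b n = plc (D l) (\<lambda>k. plc (C k) G n) n" by (rule plc_cong) (simp_all add: C)
    also have "\<dots> = plc (\<lambda>j. \<Sum>k<n. D l k * C k j) G n" by (rule plc_plc)
    also have "\<dots> = plc (\<lambda>j. if j = l then 1 else 0) G n" by (rule plc_cong) (use DC that in auto)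
    also have "\<dots> = G l" by (rule plc_unit[OF that])
    finally show ?thesis by simp
  qed
  thus ?thesis using CD by blast
qed

lemma spanning_family_in_direct_summand:
  fixes M :: "((nat \<Rightarrow> 'a::comm_ring_1) \<times> (nat \<Rightarrow> 'a)) set"
  assumes summand: "is_direct_summand n M" and basis: "is_pbasis M n b"
    and span: "\<forall>x\<in>M. \<exists>c. x = plc c G n"
  shows "spanned_by M G n"
proof -
  have bM: "\<forall>k<n. b k \<in> M" using basis unfolding is_pbasis_def by blast
  have Msub: "is_submod n M" using summand unfolding is_direct_summand_def by blast
  have "\<forall>k. \<exists>c. k < n \<longrightarrow> b k = plc c G n" using span bM by blast
  then obtain C where "\<forall>k<n. b k = plc (C k) G n" by (metis choice)
  then obtain D where "\<forall>l<n. G l = plc (D l) b n" using direct_summand_basis_change[OF summand basis] by blast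
  thus ?thesis unfolding spanned_by_def using plc_in_submod[OF Msub bM] span by simp
qed

lemma pfunctional_sum_coeffs:
  "pfunctional n (\<lambda>i. \<Sum>j<m. c j * L1 j i) (\<lambda>i. \<Sum>j<m. c j * L2 j i) v
     = (\<Sum>j<m. c j * pfunctional n (L1 j) (L2 j) v)"
proof -
  have "pfunctional n (\<lambda>i. \<Sum>j<m. c j * L1 j i) (\<lambda>i. \<Sum>j<m. c j * L2 j i) v
      = (\<Sum>i<n. \<Sum>j<m. c j * (L1 j i * fst v i + L2 j i * snd v i))"
    by (simp add: pfunctional_def sum_distrib_right sum_distrib_left sum.distrib algebra_simps)
  also have "\<dots> = (\<Sum>j<m. c j * pfunctional n (L1 j) (L2 j) v)"
    by (subst sum.swap) (simp add: pfunctional_def sum_distrib_left)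
  finally show ?thesis .
qed

text \<open>The family is a basis of \<open>M\<close>, and its coordinate functionals extend to \<open>H \<oplus> H\<^sup>*\<close>.\<close>

lemma spanning_family_unimodular:
  fixes M :: "((nat \<Rightarrow> 'a::comm_ring_1) \<times> (nat \<Rightarrow> 'a)) set"
  assumes local: "local_ring TYPE('a)" and summand: "is_direct_summand n M"
    and basis: "is_pbasis M n b" and W: "spanned_by M W n" and l: "l < n"
  shows "\<exists>i<n. fst (W l) i dvd 1 \<or> snd (W l) i dvd 1"
proof -
  obtain L1 L2 where L: "\<forall>j<n. \<forall>k<n. pfunctional n (L1 j) (L2 j) (b k) = (if j = k then 1 else 0)"
    using direct_summand_coordinate_functionals[OF summand basis] by blast
  have "\<forall>k. \<exists>c. k < n \<longrightarrow> b k = plc c W n"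
    using W basis unfolding spanned_by_def is_pbasis_def by blast
  then obtain C where C: "\<forall>k<n. b k = plc (C k) W n" by (metis choice)
  obtain D where D: "\<forall>l<n. W l = plc (D l) b n"
    and CD: "\<forall>k<n. \<forall>j<n. (\<Sum>l<n. C k l * D l j) = (if k = j then 1 else 0)"
    using direct_summand_basis_change[OF summand basis C] by blast
  have DC: "\<forall>l<n. \<forall>j<n. (\<Sum>k<n. D l k * C k j) = (if l = j then 1 else 0)"
    by (rule sum_inverse_commute[OF CD])
  have coord: "pfunctional n (L1 j) (L2 j) (W l) = D l j" if "j < n" for j
  proof -
    have "pfunctional n (L1 j) (L2 j) (W l) = (\<Sum>k<n. D l k * (if j = k then 1 else 0))"
      using D l L that by (simp add: pfunctional_plc)
    thus ?thesis using that by (simp add: if_distrib[of "\<lambda>t. _ * t"] cong: if_cong)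
  qed
  have "pfunctional n (\<lambda>i. \<Sum>j<n. C j l * L1 j i) (\<lambda>i. \<Sum>j<n. C j l * L2 j i) (W l) = 1"
    unfolding pfunctional_sum_coeffs using DC l by (simp add: coord mult.commute)
  hence "(\<Sum>i<n. (\<Sum>j<n. C j l * L1 j i) * fst (W l) i + (\<Sum>j<n. C j l * L2 j i) * snd (W l) i) dvd 1"
    unfolding pfunctional_def by simp
  then obtain i where "i < n" "(\<Sum>j<n. C j l * L1 j i) * fst (W l) i + (\<Sum>j<n. C j l * L2 j i) * snd (W l) i dvd 1"
    using local_ring_unit_sum[OF local, of "{..<n}"] by blast
  thus ?thesis using local_ring_unit_add[OF local] by (blast intro: dvd_mult_right)
qed

section \<open>A basis of \<open>H\<close> through the degree-one part of a spinor\<close>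

lemma pairing_std_basis_left: "a < n \<Longrightarrow> pairing n (std_basis a) v = v a"
  by (simp add: pairing_def std_basis_def if_distrib[of "\<lambda>t. t * _"] cong: if_cong)

lemma pairing_std_basis_right: "a < n \<Longrightarrow> pairing n v (std_basis a) = v a"
  by (simp add: pairing_def std_basis_def if_distrib[of "\<lambda>t. _ * t"] cong: if_cong)

lemma pairing_diff: "pairing n (\<lambda>k. a * p k - b * q k) v = a * pairing n p v - b * pairing n q v"
  by (simp add: pairing_def algebra_simps sum_subtractf sum_distrib_left)

lemma pairing_sum_right: "pairing n q (\<lambda>k. \<Sum>l\<in>L. c l * v l k) = (\<Sum>l\<in>L. c l * pairing n q (v l))"
proof -
  have "pairing n q (\<lambda>k. \<Sum>l\<in>L. c l * v l k) = (\<Sum>k<n. \<Sum>l\<in>L. c l * (q k * v l k))"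
    by (simp add: pairing_def sum_distrib_left mult_ac)
  also have "\<dots> = (\<Sum>l\<in>L. \<Sum>k<n. c l * (q k * v l k))" by (rule sum.swap)
  finally show ?thesis by (simp add: pairing_def sum_distrib_left)
qed

lemma sum_lessThan_split_0: "0 < (n::nat) \<Longrightarrow> (\<Sum>k<n. g k) = g 0 + (\<Sum>k\<in>{1..<n}. g k)"
proof -
  assume "0 < n"
  hence "{..<n} = insert 0 {1..<n}" by auto
  thus ?thesis by simp
qed

text \<open>If the coordinate \<open>s {i\<^sub>0}\<close> of \<open>s\<^sub>1\<close> is a unit with inverse \<open>u\<close>, then \<open>s\<^sub>1\<close> together with
  the standard basis vectors other than \<open>e\<^bsub>i\<^sub>0\<^esub>\<close> is a basis of \<open>H\<close>; the transposition of
  \<open>0\<close> and \<open>i\<^sub>0\<close> puts \<open>s\<^sub>1\<close> in position \<open>0\<close>.\<close>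

definition adapted_basis :: "(nat set \<Rightarrow> 'a::comm_ring_1) \<Rightarrow> nat \<Rightarrow> nat \<Rightarrow> nat \<Rightarrow> 'a" where
  "adapted_basis s i0 j = (if j = 0 then (\<lambda>k. s {k}) else std_basis (Transposition.transpose 0 i0 j))"

definition adapted_dual :: "(nat set \<Rightarrow> 'a::comm_ring_1) \<Rightarrow> nat \<Rightarrow> 'a \<Rightarrow> nat \<Rightarrow> nat \<Rightarrow> 'a" where
  "adapted_dual s i0 u j = (if j = 0 then (\<lambda>k. u * std_basis i0 k)
     else (\<lambda>k. std_basis (Transposition.transpose 0 i0 j) k - u * s {Transposition.transpose 0 i0 j} * std_basis i0 k))"

lemma transpose_0_less:
  fixes i0 j n :: nat
  assumes "i0 < n" "j < n"
  shows "Transposition.transpose 0 i0 j < n"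
proof -
  have "0 < n" using assms by linarith
  thus ?thesis using assms by (simp add: Transposition.transpose_def)
qed

lemma transpose_0_eq_iff: "Transposition.transpose 0 i0 j = i0 \<longleftrightarrow> j = 0"
  by (auto simp: transpose_eq_iff)

lemma transpose_0_inj: "Transposition.transpose 0 i0 j = Transposition.transpose 0 i0 k \<longleftrightarrow> j = k"
  by (metis transpose_involutory)

lemma pairing_adapted_dual:
  assumes i0: "i0 < n" and j: "j < n"
  shows "pairing n (adapted_dual s i0 u j) v = (if j = 0 then u * v i0
    else v (Transposition.transpose 0 i0 j) - u * s {Transposition.transpose 0 i0 j} * v i0)"
proof (cases "j = 0")
  case True
  have "pairing n (\<lambda>k. u * std_basis i0 k) v = u * pairing n (std_basis i0) v"
    by (simp add: pairing_def sum_distrib_left mult.assoc)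
  thus ?thesis using i0 True by (simp add: adapted_dual_def pairing_std_basis_left)
next
  case False
  let ?t = "Transposition.transpose 0 i0 j"
  have "pairing n (adapted_dual s i0 u j) v = pairing n (\<lambda>k. 1 * std_basis ?t k - (u * s {?t}) * std_basis i0 k) v"
    using False by (simp add: adapted_dual_def)
  also have "\<dots> = v ?t - u * s {?t} * v i0"
    unfolding pairing_diff using i0 j by (simp add: pairing_std_basis_left transpose_0_less)
  finally show ?thesis using False by simp
qed

lemma adapted_basis_Hcar: "i0 < n \<Longrightarrow> s \<in> ext_alg n \<Longrightarrow> j < n \<Longrightarrow> adapted_basis s i0 j \<in> Hcar n"
  using transpose_0_less[of i0 n j] by (auto simp: adapted_basis_def Hcar_def std_basis_def ext_alg_def)

lemma adapted_dual_Hcar: "i0 < n \<Longrightarrow> j < n \<Longrightarrow> adapted_dual s i0 u j \<in> Hcar n"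
  using transpose_0_less[of i0 n j] by (auto simp: adapted_dual_def Hcar_def std_basis_def)

lemma adapted_basis_at_i0: "adapted_basis s i0 j i0 = (if j = 0 then s {i0} else 0)"
  unfolding adapted_basis_def std_basis_def using transpose_0_eq_iff[of i0 j] by auto

lemma adapted_basis_at_transpose:
  "i \<noteq> 0 \<Longrightarrow> adapted_basis s i0 j (Transposition.transpose 0 i0 i) =
     (if j = 0 then s {Transposition.transpose 0 i0 i} else if j = i then 1 else 0)"
  by (auto simp: adapted_basis_def std_basis_def transpose_0_inj)

lemma adapted_dual_basis:
  assumes i0: "i0 < n" and u: "s {i0} * u = 1" and i: "i < n" and j: "j < n"
  shows "pairing n (adapted_dual s i0 u i) (adapted_basis s i0 j) = (if i = j then 1 else 0)"
proof -
  have cancel: "s {i0} * (u * x) = x" for x using u by (simp add: mult.assoc[symmetric])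
  show ?thesis using i0 i j u
    by (auto simp: pairing_adapted_dual adapted_basis_at_i0 adapted_basis_at_transpose cancel mult.commute)
qed

lemma adapted_basis_expansion:
  assumes i0: "i0 < n" and u: "s {i0} * u = 1" and s: "s \<in> ext_alg n" and x: "x \<in> Hcar n"
  shows "x p = (\<Sum>k<n. pairing n (adapted_dual s i0 u k) x * adapted_basis s i0 k p)"
proof -
  let ?t = "Transposition.transpose 0 i0"
  have n0: "0 < n" using i0 by simp
  have select: "(\<Sum>k\<in>{1..<n}. if ?t k = p then g k else 0) = (if p < n \<and> p \<noteq> i0 then g (?t p) else 0)"
    for g :: "nat \<Rightarrow> 'a"
  proof -
    have "(\<Sum>k\<in>{1..<n}. if ?t k = p then g k else 0) = (\<Sum>k\<in>{1..<n}. if k = ?t p then g k else 0)"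
      by (intro sum.cong refl) (metis transpose_involutory)
    also have "\<dots> = (if ?t p \<in> {1..<n} then g (?t p) else 0)" by simp
    also have "(?t p \<in> {1..<n}) = (p < n \<and> p \<noteq> i0)"
      using i0 by (auto simp: Transposition.transpose_def split: if_splits)
    finally show ?thesis .
  qed
  have "(\<Sum>k<n. pairing n (adapted_dual s i0 u k) x * adapted_basis s i0 k p)
      = u * x i0 * s {p} + (\<Sum>k\<in>{1..<n}. if ?t k = p then x (?t k) - u * s {?t k} * x i0 else 0)"
    unfolding sum_lessThan_split_0[OF n0] using i0
    by (auto simp: pairing_adapted_dual adapted_basis_def std_basis_def intro!: sum.cong)
  also have "\<dots> = u * x i0 * s {p} + (if p < n \<and> p \<noteq> i0 then x p - u * s {p} * x i0 else 0)"
    unfolding select by simp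
  also have "\<dots> = x p"
  proof (cases "p < n")
    case False thus ?thesis using x s by (simp add: Hcar_def ext_alg_def)
  next
    case True
    have cancel: "u * (y * s {i0}) = y" for y
    proof -
      have "u * (y * s {i0}) = y * (s {i0} * u)" by (simp add: mult_ac)
      thus ?thesis using u by simp
    qed
    show ?thesis
    proof (cases "p = i0")
      case True thus ?thesis using cancel[of "x i0"] by (simp add: mult_ac)
    next
      case False thus ?thesis using \<open>p < n\<close> by (simp add: algebra_simps)
    qed
  qed
  finally show ?thesis by simp
qed

lemma adapted_dual_expansion:
  assumes i0: "i0 < n" and u: "s {i0} * u = 1" and s: "s \<in> ext_alg n" and f: "f \<in> Hcar n"
  shows "f p = (\<Sum>k<n. pairing n f (adapted_basis s i0 k) * adapted_dual s i0 u k p)"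
proof (cases "p < n")
  case False
  have "adapted_dual s i0 u k p = 0" if "k < n" for k
  proof -
    have "adapted_dual s i0 u k \<in> Hcar n" by (rule adapted_dual_Hcar[OF i0 that])
    thus ?thesis using False unfolding Hcar_def by simp
  qed
  thus ?thesis using f False by (simp add: Hcar_def)
next
  case True
  let ?e = "adapted_basis s i0" and ?e' = "adapted_dual s i0 u"
  have "std_basis p \<in> Hcar n" using True by (simp add: Hcar_def std_basis_def)
  hence exp: "std_basis p q = (\<Sum>k<n. pairing n (?e' k) (std_basis p) * ?e k q)" for q
    using adapted_basis_expansion[OF i0 u s] by blast
  have "f p = (\<Sum>q<n. f q * std_basis p q)" using pairing_std_basis_right[OF True, of f] by (simp add: pairing_def)
  also have "\<dots> = (\<Sum>q<n. f q * (\<Sum>k<n. pairing n (?e' k) (std_basis p) * ?e k q))"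
    by (simp only: exp)
  also have "\<dots> = (\<Sum>q<n. \<Sum>k<n. pairing n (?e' k) (std_basis p) * (f q * ?e k q))"
    by (simp add: sum_distrib_left mult_ac)
  also have "\<dots> = (\<Sum>k<n. \<Sum>q<n. pairing n (?e' k) (std_basis p) * (f q * ?e k q))" by (rule sum.swap)
  also have "\<dots> = (\<Sum>k<n. pairing n (?e' k) (std_basis p) * pairing n f (?e k))"
    by (simp add: pairing_def sum_distrib_left)
  also have "\<dots> = (\<Sum>k<n. pairing n f (?e k) * ?e' k p)"
    using True by (simp add: pairing_std_basis_right mult.commute)
  finally show ?thesis .
qed

lemma dual_expansion_imp_Hbasis:
  assumes Hcar: "\<And>k. k < n \<Longrightarrow> e k \<in> Hcar n"
    and dual: "\<And>i j. i < n \<Longrightarrow> j < n \<Longrightarrow> pairing n (e' i) (e j) = (if i = j then 1 else 0)"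
    and expansion: "\<And>x p. x \<in> Hcar n \<Longrightarrow> x p = (\<Sum>k<n. pairing n (e' k) x * e k p)"
  shows "is_Hbasis n e"
  unfolding is_Hbasis_def
proof (intro conjI ballI allI impI Hcar)
  fix x :: "nat \<Rightarrow> 'a" assume x: "x \<in> Hcar n"
  let ?c = "\<lambda>k. if k < n then pairing n (e' k) x else 0"
  have "(\<forall>k\<ge>n. ?c k = 0) \<and> x = vlc ?c e n"
    using expansion[OF x] by (auto simp: vlc_def fun_eq_iff intro!: sum.cong)
  moreover have "c = ?c" if c: "(\<forall>k\<ge>n. c k = 0) \<and> x = vlc c e n" for c
  proof
    fix j show "c j = ?c j"
    proof (cases "j < n")
      case True
      have "pairing n (e' j) x = (\<Sum>k<n. c k * pairing n (e' j) (e k))"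
        using c by (simp add: vlc_def pairing_sum_right)
      also have "\<dots> = c j" using True by (simp add: dual if_distrib[of "\<lambda>t. _ * t"] cong: if_cong)
      finally show ?thesis using True by simp
    qed (use c in auto)
  qed
  ultimately show "\<exists>!c. (\<forall>k\<ge>n. c k = 0) \<and> x = vlc c e n" by (rule ex1I)
qed

section \<open>Elements of \<open>H \<oplus> H\<^sup>*\<close> annihilating a spinor\<close>

lemma sum_Diff_if: "finite A \<Longrightarrow> sum g (A - B) = (\<Sum>i\<in>A. if i \<in> B then 0 else g i)"
  by (simp add: sum.If_cases Diff_eq Int_commute)

definition pair_sign :: "nat \<Rightarrow> nat \<Rightarrow> 'a::comm_ring_1" where
  "pair_sign a b = (if a < b then 1 else -1)"

lemma wedge1_pair:
  assumes "a \<noteq> b" "a < n" "b < n"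
  shows "wedge1 n f w {a,b} = pair_sign a b * (f a * w {b} - f b * (w {a} :: 'a::comm_ring_1))"
proof -
  have "{a,b} - {a} = {b}" "{a,b} - {b} = {a}" using assms by auto
  moreover have "{j\<in>{a,b}. j < a} = (if b < a then {b} else {})" "{j\<in>{a,b}. j < b} = (if a < b then {a} else {})"
    by auto
  ultimately show ?thesis using assms
    by (auto simp: wedge1_ext_sign ext_sign_def pair_sign_def algebra_simps)
qed

text \<open>\<open>contr_pair_coeff s a b i\<close> is the coefficient of \<open>p i\<close> in the \<open>{a,b}\<close>-component of the
  contraction \<open>\<iota>\<^sub>p s\<close>.\<close>

definition contr_pair_coeff :: "(nat set \<Rightarrow> 'a::comm_ring_1) \<Rightarrow> nat \<Rightarrow> nat \<Rightarrow> nat \<Rightarrow> 'a" where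
  "contr_pair_coeff s a b i = (if i = a \<or> i = b then 0 else ext_sign {a,b} i * s (insert i {a,b}))"

lemma contr_pair:
  assumes "a < n" "b < n"
  shows "contr n p s {a,b} = (\<Sum>i<n. p i * contr_pair_coeff s a b i)"
  unfolding contr_ext_sign using assms
  by (simp add: sum_Diff_if) (rule sum.cong, auto simp: contr_pair_coeff_def mult_ac)

lemma annihilator_degree_0:
  assumes "cliff n (f, p) s = (\<lambda>_. 0)"
  shows "pairing n p (\<lambda>k. s {k}) = 0"
proof -
  have "cliff n (f, p) s {} = 0" using assms by simp
  moreover have "ext_sign {} i = (1::'a)" for i by (simp add: ext_sign_def)
  ultimately show ?thesis by (simp add: cliff_def wedge1_ext_sign contr_ext_sign pairing_def)
qed

lemma annihilator_degree_2:
  assumes "cliff n (f, p) s = (\<lambda>_. 0)" and ab: "a \<noteq> b" "a < n" "b < n"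
  shows "f a * s {b} - f b * s {a} = - pair_sign a b * (\<Sum>i<n. p i * contr_pair_coeff s a b i)"
proof -
  have "cliff n (f, p) s {a,b} = 0" using assms by simp
  hence "pair_sign a b * (f a * s {b} - f b * s {a}) = - (\<Sum>i<n. p i * contr_pair_coeff s a b i)"
    using ab by (simp add: cliff_def wedge1_pair contr_pair eq_neg_iff_add_eq_0)
  hence "pair_sign a b * (pair_sign a b * (f a * s {b} - f b * s {a}))
      = - pair_sign a b * (\<Sum>i<n. p i * contr_pair_coeff s a b i)"
    by simp
  moreover have "pair_sign a b * pair_sign a b = (1::'a)" by (simp add: pair_sign_def)
  ultimately show ?thesis by (simp add: mult.assoc[symmetric])
qed

definition coord_coeff :: "(nat set \<Rightarrow> 'a::comm_ring_1) \<Rightarrow> nat \<Rightarrow> (nat \<Rightarrow> 'a) \<Rightarrow> nat \<Rightarrow> nat \<Rightarrow> 'a" where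
  "coord_coeff s n q a i = (\<Sum>b<n. q b * (if b = a then 0 else - pair_sign a b * contr_pair_coeff s a b i))"

text \<open>Pairing the degree-two relations with a \<open>q\<close> satisfying \<open>q(s\<^sub>1) = 1\<close> expresses the
  \<open>H\<close>-component of an annihilating element through its \<open>H\<^sup>*\<close>-component, up to a multiple of
  \<open>s\<^sub>1\<close>.\<close>

lemma annihilator_coordinate_formula:
  assumes ann: "cliff n (f, p) s = (\<lambda>_. 0)" and a: "a < n" and q: "pairing n q (\<lambda>k. s {k}) = 1"
  shows "f a = pairing n q f * s {a} + (\<Sum>i<n. p i * coord_coeff s n q a i)"
proof -
  have rel: "f a * s {b} - f b * s {a} = (if b = a then 0 else - pair_sign a b * (\<Sum>i<n. p i * contr_pair_coeff s a b i))"
    if "b < n" for b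
    using annihilator_degree_2[OF ann _ a that] by auto
  have "f a - pairing n q f * s {a} = f a * pairing n q (\<lambda>k. s {k}) - pairing n q f * s {a}"
    using q by simp
  also have "\<dots> = (\<Sum>b<n. q b * (f a * s {b} - f b * s {a}))"
    by (simp add: pairing_def algebra_simps sum_subtractf sum_distrib_left sum_distrib_right)
  also have "\<dots> = (\<Sum>b<n. q b * (if b = a then 0 else - pair_sign a b * (\<Sum>i<n. p i * contr_pair_coeff s a b i)))"
    by (rule sum.cong) (simp_all add: rel)
  also have "\<dots> = (\<Sum>b<n. \<Sum>i<n. p i * (q b * (if b = a then 0 else - pair_sign a b * contr_pair_coeff s a b i)))"
    by (rule sum.cong) (auto simp: sum_distrib_left mult_ac)
  also have "\<dots> = (\<Sum>i<n. p i * coord_coeff s n q a i)"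
    by (subst sum.swap) (simp add: coord_coeff_def sum_distrib_left)
  finally show ?thesis by (simp add: algebra_simps)
qed

section \<open>The normal form of \<open>M\<close>\<close>

definition normal_gens :: "nat \<Rightarrow> (nat \<Rightarrow> nat \<Rightarrow> 'a::comm_ring_1) \<Rightarrow> (nat \<Rightarrow> nat \<Rightarrow> 'a) \<Rightarrow> (nat \<Rightarrow> nat \<Rightarrow> 'a)
    \<Rightarrow> nat \<Rightarrow> (nat \<Rightarrow> 'a) \<times> (nat \<Rightarrow> 'a)" where
  "normal_gens n e e' X = (\<lambda>i. if i = 0 then (e 0, \<lambda>_. 0)
                              else (\<lambda>k. \<Sum>j\<in>{1..<n}. X j i * e j k, e' i))"

text \<open>Column \<open>j\<close> of \<open>normal_matrix\<close> holds the \<open>e\<close>-coordinates of the \<open>H\<close>-component that the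
  coordinate formula attaches to the \<open>H\<^sup>*\<close>-component \<open>e'\<^sub>j\<close>.\<close>

definition normal_matrix :: "nat \<Rightarrow> (nat set \<Rightarrow> 'a::comm_ring_1) \<Rightarrow> (nat \<Rightarrow> nat \<Rightarrow> 'a) \<Rightarrow> nat \<Rightarrow> nat \<Rightarrow> 'a" where
  "normal_matrix n s e' k j =
     pairing n (e' k) (\<lambda>a. if a < n then \<Sum>i<n. e' j i * coord_coeff s n (e' 0) a i else 0)"

lemma annihilator_in_normal_span:
  fixes e e' :: "nat \<Rightarrow> nat \<Rightarrow> 'a::comm_ring_1"
  assumes npos: "0 < n" and eH: "\<And>k. k < n \<Longrightarrow> e k \<in> Hcar n"
    and expH: "\<And>x p. x \<in> Hcar n \<Longrightarrow> x p = (\<Sum>k<n. pairing n (e' k) x * e k p)"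
    and expD: "\<And>f p. f \<in> Hcar n \<Longrightarrow> f p = (\<Sum>k<n. pairing n f (e k) * e' k p)"
    and e0: "e 0 = (\<lambda>k. s {k})" and q: "pairing n (e' 0) (\<lambda>k. s {k}) = 1"
    and fH: "f \<in> Hcar n" and pH: "p \<in> Hcar n" and ann: "cliff n (f, p) s = (\<lambda>_. 0)"
  shows "\<exists>c. (f, p) = plc c (normal_gens n e e' (normal_matrix n s e')) n"
proof -
  let ?X = "normal_matrix n s e'" and ?G = "normal_gens n e e' (normal_matrix n s e')"
  define h where "h j = (\<lambda>a. if a < n then (\<Sum>i<n. e' j i * coord_coeff s n (e' 0) a i) else 0)" for j
  have h_expansion: "h j a = ?X 0 j * e 0 a + (\<Sum>k\<in>{1..<n}. ?X k j * e k a)" for j a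
  proof -
    have "h j \<in> Hcar n" by (simp add: h_def Hcar_def)
    hence "h j a = (\<Sum>k<n. pairing n (e' k) (h j) * e k a)" by (rule expH)
    also have "\<dots> = (\<Sum>k<n. ?X k j * e k a)" by (simp add: normal_matrix_def h_def)
    finally show ?thesis by (simp add: sum_lessThan_split_0[OF npos])
  qed
  have p0: "pairing n p (e 0) = 0" using annihilator_degree_0[OF ann] e0 by simp
  have p_coord_sum: "(\<Sum>i<n. p i * coord_coeff s n (e' 0) a i) = (\<Sum>j\<in>{1..<n}. pairing n p (e j) * h j a)"
    if a: "a < n" for a
  proof -
    have "(\<Sum>i<n. p i * coord_coeff s n (e' 0) a i)
        = (\<Sum>i<n. \<Sum>j<n. pairing n p (e j) * (e' j i * coord_coeff s n (e' 0) a i))"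
      by (subst expD[OF pH]) (simp add: sum_distrib_right sum_distrib_left mult_ac)
    also have "\<dots> = (\<Sum>j<n. pairing n p (e j) * h j a)"
      using a by (subst sum.swap) (simp add: h_def sum_distrib_left)
    also have "\<dots> = (\<Sum>j\<in>{1..<n}. pairing n p (e j) * h j a)"
      using sum_lessThan_split_0[OF npos, of "\<lambda>j. pairing n p (e j) * h j a"] p0 by simp
    finally show ?thesis .
  qed
  define c where "c k = (if k = 0 then pairing n (e' 0) f + (\<Sum>j\<in>{1..<n}. pairing n p (e j) * ?X 0 j)
                         else pairing n p (e k))" for k
  have "(f, p) = plc c ?G n"
  proof (rule pair_fun_eqI)
    fix q
    have fst_G: "fst (plc c ?G n) q = c 0 * e 0 q + (\<Sum>k\<in>{1..<n}. pairing n p (e k) * (\<Sum>j\<in>{1..<n}. ?X j k * e j q))"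
      using sum_lessThan_split_0[OF npos, of "\<lambda>k. c k * fst (?G k) q"] by (simp add: normal_gens_def c_def)
    show "fst (f, p) q = fst (plc c ?G n) q"
    proof (cases "q < n")
      case False
      have "e k q = 0" if "k < n" for k using eH[OF that] False by (simp add: Hcar_def)
      thus ?thesis unfolding fst_G using fH False npos by (simp add: Hcar_def)
    next
      case True
      have "f q = pairing n (e' 0) f * s {q} + (\<Sum>j\<in>{1..<n}. pairing n p (e j) * h j q)"
        using annihilator_coordinate_formula[OF ann True q] p_coord_sum[OF True] by simp
      also have "\<dots> = pairing n (e' 0) f * e 0 q + (\<Sum>j\<in>{1..<n}. pairing n p (e j) *
          (?X 0 j * e 0 q + (\<Sum>k\<in>{1..<n}. ?X k j * e k q)))"
        using e0 h_expansion by simp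
      also have "\<dots> = fst (plc c ?G n) q"
        unfolding fst_G by (simp add: c_def algebra_simps sum.distrib sum_distrib_left sum_distrib_right)
      finally show ?thesis by simp
    qed
  next
    fix q
    have "snd (plc c ?G n) q = (\<Sum>k\<in>{1..<n}. pairing n p (e k) * e' k q)"
      using sum_lessThan_split_0[OF npos, of "\<lambda>k. c k * snd (?G k) q"] by (simp add: normal_gens_def c_def)
    also have "\<dots> = (\<Sum>k<n. pairing n p (e k) * e' k q)"
      using sum_lessThan_split_0[OF npos, of "\<lambda>k. pairing n p (e k) * e' k q"] p0 by simp
    also have "\<dots> = p q" using expD[OF pH] by simp
    finally show "snd (f, p) q = snd (plc c ?G n) q" by simp
  qed
  thus ?thesis by blast
qed

lemma normal_gens_skew:
  assumes dual: "\<And>a m. a < n \<Longrightarrow> m < n \<Longrightarrow> pairing n (e' a) (e m) = (if a = m then 1 else 0)"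
    and orth: "\<And>i j. i \<in> {1..<n} \<Longrightarrow> j \<in> {1..<n} \<Longrightarrow>
      polar n (normal_gens n e e' X i) (normal_gens n e e' X j) = 0"
  shows "\<forall>i\<in>{1..<n}. \<forall>j\<in>{1..<n}. X j i = - X i j"
proof (intro ballI)
  fix i j assume i: "i \<in> {1..<n}" and j: "j \<in> {1..<n}"
  have coeff: "pairing n (e' a) (fst (normal_gens n e e' X l)) = X a l" if a: "a \<in> {1..<n}" and l: "l \<in> {1..<n}" for a l
  proof -
    have "pairing n (e' a) (fst (normal_gens n e e' X l)) = (\<Sum>m\<in>{1..<n}. X m l * pairing n (e' a) (e m))"
      using l by (simp add: normal_gens_def pairing_sum_right)
    also have "\<dots> = (\<Sum>m\<in>{1..<n}. if m = a then X m l else 0)"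
      by (rule sum.cong) (use a in \<open>auto simp: dual\<close>)
    finally show ?thesis using a by simp
  qed
  have "snd (normal_gens n e e' X l) = e' l" if "l \<in> {1..<n}" for l
    using that by (simp add: normal_gens_def)
  hence "polar n (normal_gens n e e' X i) (normal_gens n e e' X j) = X i j + X j i"
    unfolding polar_def using i j coeff[OF i j] coeff[OF j i] by simp
  thus "X j i = - X i j" using orth[OF i j] by (simp add: eq_neg_iff_add_eq_0 add.commute)
qed

section \<open>Maximal minors\<close>

lemma subset_card_pred_iff:
  assumes "0 < n"
  shows "(I \<subseteq> {..<n} \<and> card I = n - 1) \<longleftrightarrow> (\<exists>i<n. I = {..<n} - {i})"
proof
  assume I: "I \<subseteq> {..<n} \<and> card I = n - 1"
  hence "finite I" using finite_subset by blast
  hence "card ({..<n} - I) = 1" using assms I by (simp add: card_Diff_subset)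
  then obtain i where i: "{..<n} - I = {i}" by (rule card_1_singletonE)
  hence "I = {..<n} - {i}" "i < n" using I by auto
  thus "\<exists>i<n. I = {..<n} - {i}" by blast
qed auto

lemma sorted_list_of_set_remove_nth:
  assumes "i < n" "a < n - 1"
  shows "sorted_list_of_set ({..<n} - {i}) ! a = insert_index i a"
proof -
  have "sorted_list_of_set ({..<n} - {i}) = [0..<i] @ [Suc i..<n]"
    by (rule sorted_distinct_set_unique) (use assms in \<open>auto simp: sorted_append\<close>)
  thus ?thesis using assms by (simp add: nth_append insert_index_def)
qed

lemma insert_index_less: "a < n - 1 \<Longrightarrow> insert_index i a < n"
  by (simp add: insert_index_def) arith

lemma detk_cong: "(\<And>a c. a < k \<Longrightarrow> c < k \<Longrightarrow> A a c = B a c) \<Longrightarrow> detk k A = detk k B"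
  unfolding detk_def by (intro sum.cong refl arg_cong[where f = "\<lambda>x. _ * x"] prod.cong)
    (auto dest: permutes_in_image)

lemma insert_index_neq: "insert_index i a \<noteq> i"
  by (simp add: insert_index_def)

lemma insert_index_inj: "insert_index i a = insert_index i a' \<longleftrightarrow> a = a'"
  by (simp add: insert_index_def)

lemma insert_index_surj:
  assumes "i < n" "p < n" "p \<noteq> i"
  shows "\<exists>a<n - 1. p = insert_index i a"
proof (cases "p < i")
  case True thus ?thesis using assms by (intro exI[of _ p]) (simp add: insert_index_def)
next
  case False thus ?thesis using assms by (intro exI[of _ "p - 1"]) (simp add: insert_index_def, arith)
qed

lemma sum_lessThan_insert_index:
  assumes "i < n"
  shows "(\<Sum>p<n. h p) = h i + (\<Sum>a<n - 1. h (insert_index i a))"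
proof -
  have "{..<n} = insert i (insert_index i ` {..<n - 1})"
    using assms insert_index_surj insert_index_less by (auto simp: insert_index_neq)
  moreover have "i \<notin> insert_index i ` {..<n - 1}" by (auto simp: insert_index_def)
  ultimately have "(\<Sum>p<n. h p) = h i + sum h (insert_index i ` {..<n - 1})" by simp
  also have "sum h (insert_index i ` {..<n - 1}) = (\<Sum>a<n - 1. h (insert_index i a))"
    by (rule sum.reindex[unfolded comp_def]) (simp add: inj_on_def insert_index_inj)
  finally show ?thesis .
qed

lemma minor_ideal_eq_UNIV_iff:
  assumes local: "local_ring TYPE('a::comm_ring_1)" and npos: "0 < n"
  shows "minor_ideal n (n - 1) (A :: nat \<Rightarrow> nat \<Rightarrow> 'a) = UNIV \<longleftrightarrow>
    (\<exists>i<n. \<exists>j<n. detk (n - 1) (\<lambda>a c. A (insert_index i a) (insert_index j c)) dvd 1)"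
proof -
  have minor: "detk (n - 1) (\<lambda>a c. A (sorted_list_of_set ({..<n} - {i}) ! a) (sorted_list_of_set ({..<n} - {j}) ! c))
      = detk (n - 1) (\<lambda>a c. A (insert_index i a) (insert_index j c))" if "i < n" "j < n" for i j
    using that by (intro detk_cong) (simp add: sorted_list_of_set_remove_nth)
  let ?L = "{detk (n - 1) (\<lambda>a c. A (sorted_list_of_set I ! a) (sorted_list_of_set J ! c)) | I J.
        I \<subseteq> {..<n} \<and> J \<subseteq> {..<n} \<and> card I = n - 1 \<and> card J = n - 1}"
  let ?R = "{detk (n - 1) (\<lambda>a c. A (insert_index i a) (insert_index j c)) | i j. i < n \<and> j < n}"
  have "?L = ?R"
  proof
    show "?L \<subseteq> ?R"
    proof
      fix g assume "g \<in> ?L"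
      then obtain I J where g: "g = detk (n - 1) (\<lambda>a c. A (sorted_list_of_set I ! a) (sorted_list_of_set J ! c))"
        and "I \<subseteq> {..<n} \<and> card I = n - 1" "J \<subseteq> {..<n} \<and> card J = n - 1" by blast
      then obtain i j where ij: "i < n" "j < n" and "I = {..<n} - {i}" "J = {..<n} - {j}"
        unfolding subset_card_pred_iff[OF npos] by blast
      hence "g = detk (n - 1) (\<lambda>a c. A (insert_index i a) (insert_index j c))"
        unfolding g using minor[OF ij] by simp
      thus "g \<in> ?R" using ij by blast
    qed
    show "?R \<subseteq> ?L"
    proof
      fix g assume "g \<in> ?R"
      then obtain i j where ij: "i < n" "j < n" and g: "g = detk (n - 1) (\<lambda>a c. A (insert_index i a) (insert_index j c))"
        by blast
      have "g = detk (n - 1) (\<lambda>a c. A (sorted_list_of_set ({..<n} - {i}) ! a)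
          (sorted_list_of_set ({..<n} - {j}) ! c))"
        unfolding g using minor[OF ij] by simp
      moreover have "{..<n} - {i} \<subseteq> {..<n} \<and> card ({..<n} - {i}) = n - 1"
        "{..<n} - {j} \<subseteq> {..<n} \<and> card ({..<n} - {j}) = n - 1"
        using ij by auto
      ultimately show "g \<in> ?L" by blast
    qed
  qed
  hence "minor_ideal n (n - 1) A = ideal_gen ?R" unfolding minor_ideal_def by simp
  thus ?thesis using ideal_gen_eq_UNIV_iff[OF local, of ?R] by auto
qed

lemma unit_detk_inverse:
  fixes A :: "nat \<Rightarrow> nat \<Rightarrow> 'a::comm_ring_1"
  assumes "detk n A dvd 1"
  shows "\<exists>B. \<forall>i<n. \<forall>j<n. (\<Sum>k<n. A i k * B k j) = (if i = j then 1 else 0)"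
proof -
  obtain B where B: "B \<in> carrier_mat n n" "fun_mat n A * B = 1\<^sub>m n"
    using unit_det_inverse_mat[OF fun_mat_carrier] assms unfolding detk_eq_det by blast
  hence "fun_mat n (\<lambda>i j. B $$ (i, j)) = B" by (intro eq_matI) (auto simp: fun_mat_def)
  thus ?thesis using B(2) unfolding fun_mat_inverse_iff[symmetric] by metis
qed

lemma detk_minor_product:
  fixes C E :: "nat \<Rightarrow> nat \<Rightarrow> 'a::comm_ring_1"
  assumes P: "\<And>p k. k < n \<Longrightarrow> P p k = (\<Sum>l<n - 1. C k (Suc l) * E (Suc l) p)"
  shows "detk (n - 1) (\<lambda>a c. P (insert_index i a) (insert_index j c))
    = det (mat_delete (fun_mat n C) j 0) * det (mat_delete (fun_mat n E) 0 i)"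
proof -
  let ?N = "n - 1" and ?Cd = "mat_delete (fun_mat n C) j 0" and ?Ed = "mat_delete (fun_mat n E) 0 i"
  have carrier: "?Cd \<in> carrier_mat ?N ?N" "?Ed \<in> carrier_mat ?N ?N"
    by (rule mat_delete_carrier[OF fun_mat_carrier])+
  have "fun_mat ?N (\<lambda>a c. P (insert_index i a) (insert_index j c)) = transpose_mat (?Cd * ?Ed)"
  proof (rule eq_matI)
    fix a c assume "a < dim_row (transpose_mat (?Cd * ?Ed))" "c < dim_col (transpose_mat (?Cd * ?Ed))"
    hence a: "a < ?N" and c: "c < ?N" using carrier by auto
    have "P (insert_index i a) (insert_index j c)
        = (\<Sum>l<?N. C (insert_index j c) (Suc l) * E (Suc l) (insert_index i a))"
      by (rule P[OF insert_index_less[OF c]])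
    also have "\<dots> = transpose_mat (?Cd * ?Ed) $$ (a, c)"
      using a c carrier by (simp add: mat_delete_def fun_mat_def insert_index_def scalar_prod_def atLeast0LessThan)
    finally show "fun_mat ?N (\<lambda>a c. P (insert_index i a) (insert_index j c)) $$ (a, c)
        = transpose_mat (?Cd * ?Ed) $$ (a, c)" using a c by simp
  qed (simp_all add: fun_mat_def)
  hence "detk ?N (\<lambda>a c. P (insert_index i a) (insert_index j c)) = det (transpose_mat (?Cd * ?Ed))"
    by (simp add: detk_eq_det)
  also have "\<dots> = det ?Cd * det ?Ed"
    using carrier by (simp add: det_transpose[OF mult_carrier_mat] det_mult)
  finally show ?thesis .
qed

lemma normal_form_imp_minor_ideal:
  fixes M :: "((nat \<Rightarrow> 'a::comm_ring_1) \<times> (nat \<Rightarrow> 'a)) set"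
  assumes local: "local_ring TYPE('a)" and summand: "is_direct_summand n M"
    and dual: "is_dual_basis n e e'" and M: "M = {plc c (normal_gens n e e' X) n | c. True}"
    and npos: "0 < n" and basis: "is_pbasis M n b"
  shows "minor_ideal n (n - 1) (Pmatrix b) = UNIV"
proof -
  let ?G = "normal_gens n e e' X" and ?N = "n - 1"
  have "\<forall>k. \<exists>c. k < n \<longrightarrow> b k = plc c ?G n" using basis unfolding M is_pbasis_def by blast
  then obtain C where C: "\<forall>k<n. b k = plc (C k) ?G n" by (metis choice)
  obtain D where "\<forall>k<n. \<forall>j<n. (\<Sum>l<n. C k l * D l j) = (if k = j then 1 else 0)"
    using direct_summand_basis_change[OF summand basis C] by blast
  hence "det (fun_mat n C) dvd 1" by (rule inverse_unit_det)
  then obtain j where j: "j < n" "det (mat_delete (fun_mat n C) j 0) dvd 1"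
    using local_ring_unit_minor_col[OF local fun_mat_carrier npos] by blast
  have "\<forall>l<n. \<forall>m<n. (\<Sum>i<n. e' l i * e m i) = (if l = m then 1 else 0)"
    using dual unfolding is_dual_basis_def by blast
  hence "det (fun_mat n e') dvd 1" by (rule inverse_unit_det)
  then obtain i where i: "i < n" "det (mat_delete (fun_mat n e') 0 i) dvd 1"
    using local_ring_unit_minor_row[OF local fun_mat_carrier npos] by blast
  \<comment> \<open>only the generators \<open>G\<^sub>l\<close>, \<open>l \<ge> 1\<close>, have a nonzero \<open>H\<^sup>*\<close>-component, namely \<open>e'\<^sub>l\<close>\<close>
  have "Pmatrix b p k = (\<Sum>l<?N. C k (Suc l) * e' (Suc l) p)" if "k < n" for p k
  proof -
    have "Pmatrix b p k = (\<Sum>l<Suc ?N. C k l * snd (?G l) p)" using C that npos by (simp add: Pmatrix_def)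
    also have "\<dots> = (\<Sum>l<?N. C k (Suc l) * e' (Suc l) p)"
      by (subst sum.lessThan_Suc_shift) (simp add: normal_gens_def)
    finally show ?thesis .
  qed
  hence "detk ?N (\<lambda>a c. Pmatrix b (insert_index i a) (insert_index j c))
      = det (mat_delete (fun_mat n C) j 0) * det (mat_delete (fun_mat n e') 0 i)"
    by (rule detk_minor_product)
  hence "detk ?N (\<lambda>a c. Pmatrix b (insert_index i a) (insert_index j c)) dvd 1"
    using i(2) j(2) by simp
  thus ?thesis unfolding minor_ideal_eq_UNIV_iff[OF local npos] using i(1) j(1) by blast
qed

lemma unit_minor_generators:
  fixes M :: "((nat \<Rightarrow> 'a::comm_ring_1) \<times> (nat \<Rightarrow> 'a)) set"
  assumes Msub: "is_submod n M" and bM: "\<forall>k<n. b k \<in> M"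
    and unit: "detk (n - 1) (\<lambda>a c. Pmatrix b (insert_index a0 a) (insert_index j0 c)) dvd 1"
  shows "\<exists>g. (\<forall>c. g c \<in> M) \<and>
    (\<forall>c<n - 1. \<forall>a<n - 1. snd (g c) (insert_index a0 a) = (if a = c then 1 else 0)) \<and>
    (\<forall>l<n - 1. b (insert_index j0 l) = plc (\<lambda>c. Pmatrix b (insert_index a0 c) (insert_index j0 l)) g (n - 1))"
proof -
  let ?N = "n - 1"
  define A where "A = (\<lambda>a c. Pmatrix b (insert_index a0 a) (insert_index j0 c))"
  obtain B where AB: "\<forall>a<?N. \<forall>c<?N. (\<Sum>k<?N. A a k * B k c) = (if a = c then 1 else 0)"
    using unit_detk_inverse[OF unit[folded A_def]] by blast
  have BA: "\<forall>a<?N. \<forall>c<?N. (\<Sum>k<?N. B a k * A k c) = (if a = c then 1 else 0)"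
    by (rule sum_inverse_commute[OF AB])
  define g where "g c = plc (\<lambda>l. B l c) (\<lambda>l. b (insert_index j0 l)) ?N" for c
  have "g c \<in> M" for c
    unfolding g_def using bM insert_index_less by (intro plc_in_submod[OF Msub]) auto
  moreover have "snd (g c) (insert_index a0 a) = (if a = c then 1 else 0)" if "a < ?N" "c < ?N" for a c
  proof -
    have "snd (g c) (insert_index a0 a) = (\<Sum>l<?N. A a l * B l c)"
      by (simp add: g_def A_def Pmatrix_def mult.commute)
    thus ?thesis using AB that by simp
  qed
  moreover have "b (insert_index j0 l) = plc (\<lambda>c. A c l) g ?N" if l: "l < ?N" for l
  proof -
    have "plc (\<lambda>c. A c l) g ?N = plc (\<lambda>l'. \<Sum>c<?N. A c l * B l' c) (\<lambda>l'. b (insert_index j0 l')) ?N"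
      unfolding g_def by (rule plc_plc)
    also have "\<dots> = plc (\<lambda>l'. if l' = l then 1 else 0) (\<lambda>l'. b (insert_index j0 l')) ?N"
      by (rule plc_cong) (use BA l in \<open>auto simp: mult.commute\<close>)
    also have "\<dots> = b (insert_index j0 l)" by (rule plc_unit[OF l])
    finally show ?thesis by simp
  qed
  ultimately show ?thesis unfolding A_def by (intro exI[of _ g]) blast
qed

lemma unit_minor_normalized_basis:
  fixes M :: "((nat \<Rightarrow> 'a::comm_ring_1) \<times> (nat \<Rightarrow> 'a)) set"
  assumes summand: "is_direct_summand n M" and basis: "is_pbasis M n b"
    and a0: "a0 < n" and j0: "j0 < n"
    and unit: "detk (n - 1) (\<lambda>a c. Pmatrix b (insert_index a0 a) (insert_index j0 c)) dvd 1"
  shows "\<exists>W z. spanned_by M W n \<and>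
    (\<forall>c<n - 1. \<forall>a<n - 1. snd (W c) (insert_index a0 a) = (if a = c then 1 else 0)) \<and>
    snd (W (n - 1)) = (\<lambda>p. if p = a0 then z else 0)"
proof -
  let ?N = "n - 1" and ?P = "Pmatrix b"
  have n: "n = Suc ?N" using a0 by simp
  have Msub: "is_submod n M" using summand unfolding is_direct_summand_def by blast
  have bM: "\<forall>k<n. b k \<in> M" using basis unfolding is_pbasis_def by blast
  obtain g' where g'M: "\<forall>c. g' c \<in> M"
    and snd_g': "\<forall>c<?N. \<forall>a<?N. snd (g' c) (insert_index a0 a) = (if a = c then 1 else 0)"
    and b_g': "\<forall>l<?N. b (insert_index j0 l) = plc (\<lambda>c. ?P (insert_index a0 c) (insert_index j0 l)) g' ?N"
    using unit_minor_generators[OF Msub bM unit] by blast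
  \<comment> \<open>subtracting from \<open>b\<^bsub>j\<^sub>0\<^esub>\<close> its projection onto the span of \<open>g'\<close> clears the coordinates other than \<open>a\<^sub>0\<close>\<close>
  define g'' where "g'' = padd (b j0) (psmul (-1) (plc (\<lambda>c. ?P (insert_index a0 c) j0) g' ?N))"
  define W where "W k = (if k < ?N then g' k else g'')" for k
  have g''M: "g'' \<in> M"
  proof -
    have "plc (\<lambda>c. ?P (insert_index a0 c) j0) g' ?N \<in> M" using plc_in_submod[OF Msub] g'M by blast
    thus ?thesis unfolding g''_def using Msub bM j0 unfolding is_submod_def by blast
  qed
  have snd_g''_off: "snd g'' (insert_index a0 a) = 0" if a: "a < ?N" for a
  proof -
    have "(\<Sum>c<?N. ?P (insert_index a0 c) j0 * snd (g' c) (insert_index a0 a))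
        = (\<Sum>c<?N. if c = a then ?P (insert_index a0 c) j0 else 0)"
      by (rule sum.cong) (use a snd_g' in auto)
    thus ?thesis using a by (simp add: g''_def Pmatrix_def)
  qed
  have snd_g'': "snd g'' = (\<lambda>p. if p = a0 then snd g'' a0 else 0)"
  proof
    fix p show "snd g'' p = (if p = a0 then snd g'' a0 else 0)"
    proof (cases "p < n \<and> p \<noteq> a0")
      case True thus ?thesis using insert_index_surj[OF a0] snd_g''_off by fastforce
    next
      case False
      have "snd g'' \<in> Hcar n" using g''M Msub unfolding is_submod_def HHcar_def by auto
      thus ?thesis using False by (auto simp: Hcar_def)
    qed
  qed
  have W_last: "plc d W n = padd (plc d g' ?N) (psmul (d ?N) g'')" for d
  proof -
    have "plc d W n = padd (plc d W ?N) (psmul (d ?N) (W ?N))" using n plc_Suc by metis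
    moreover have "plc d W ?N = plc d g' ?N" by (rule plc_cong) (simp_all add: W_def)
    ultimately show ?thesis by (simp add: W_def)
  qed
  have "\<exists>d. b k = plc d W n" if k: "k < n" for k
  proof (cases "k = j0")
    case True
    let ?d = "\<lambda>c. if c < ?N then ?P (insert_index a0 c) j0 else 1"
    have "plc ?d g' ?N = plc (\<lambda>c. ?P (insert_index a0 c) j0) g' ?N" by (rule plc_cong) simp_all
    hence "plc ?d W n = b k" unfolding W_last g''_def True by (intro pair_fun_eqI) (simp_all del: fst_plc snd_plc)
    thus ?thesis by (intro exI[of _ ?d]) simp
  next
    case False
    then obtain l where l: "l < ?N" "k = insert_index j0 l" using insert_index_surj[OF j0 k] by blast
    let ?d = "\<lambda>c. if c < ?N then ?P (insert_index a0 c) (insert_index j0 l) else 0"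
    have "plc ?d g' ?N = plc (\<lambda>c. ?P (insert_index a0 c) (insert_index j0 l)) g' ?N"
      by (rule plc_cong) simp_all
    hence "plc ?d g' ?N = b k" using b_g' l by simp
    hence "plc ?d W n = b k" unfolding W_last by (intro pair_fun_eqI) (simp_all del: fst_plc snd_plc)
    thus ?thesis by (intro exI[of _ ?d]) simp
  qed
  hence "spanned_by M W n"
    using g'M g''M by (intro spanned_by_trans[OF pbasis_spanned_by[OF basis]]) (auto simp: W_def)
  thus ?thesis using snd_g' snd_g'' by (intro exI[of _ W] exI[of _ "snd g'' a0"]) (simp add: W_def)
qed

section \<open>Isotropic summands with a pure spinor\<close>

locale pure_spinor =
  fixes n :: nat and M :: "((nat \<Rightarrow> 'a::comm_ring_1) \<times> (nat \<Rightarrow> 'a)) set" and s :: "nat set \<Rightarrow> 'a"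
  assumes local: "local_ring TYPE('a)"
    and half: "(2::'a) dvd 1"
    and summand: "is_direct_summand n M"
    and isotropic: "totally_isotropic n M"
    and s_odd: "s \<in> ext_odd n"
    and annihilator: "{w \<in> ext_alg n. \<forall>x\<in>M. cliff n x w = (\<lambda>_. 0)} = {(\<lambda>S. r * s S) | r. True}"
begin

lemma submod: "is_submod n M"
  using summand unfolding is_direct_summand_def by blast

lemma s_in_ext_alg: "s \<in> ext_alg n"
  using s_odd unfolding ext_odd_def by blast

lemma s_empty: "s {} = 0"
  using s_odd unfolding ext_odd_def by simp

lemma polar_eq_0: "x \<in> M \<Longrightarrow> y \<in> M \<Longrightarrow> polar n x y = 0"
  by (rule polar_eq_0_if_isotropic[OF isotropic submod])

lemma cliff_s: "x \<in> M \<Longrightarrow> cliff n x s = (\<lambda>_. 0)"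
proof -
  have "s \<in> {(\<lambda>S. r * s S) | r. True}" by (rule CollectI, rule exI[of _ 1]) simp
  thus "x \<in> M \<Longrightarrow> cliff n x s = (\<lambda>_. 0)" unfolding annihilator[symmetric] by blast
qed

text \<open>The product is annihilated by \<open>M\<close>, hence a multiple of \<open>s\<close>.\<close>

lemma cliff_prod_multiple_of_s:
  assumes K: "spanned_by M K m" and w: "w \<in> ext_alg n"
  shows "\<exists>r. cliff_prod n K m w = (\<lambda>S. r * s S)"
proof -
  have orth: "\<forall>i<m. \<forall>j<m. polar n (K i) (K j) = 0" using K polar_eq_0 unfolding spanned_by_def by blast
  have "cliff n x (cliff_prod n K m w) = (\<lambda>_. 0)" if "x \<in> M" for x
  proof -
    obtain c where "x = plc c K m" using K \<open>x \<in> M\<close> unfolding spanned_by_def by blast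
    thus ?thesis using cliff_plc_cliff_prod[OF half w orth] by simp
  qed
  hence "cliff_prod n K m w \<in> {w \<in> ext_alg n. \<forall>x\<in>M. cliff n x w = (\<lambda>_. 0)}"
    using cliff_prod_in_ext_alg[OF w] by simp
  thus ?thesis unfolding annihilator by blast
qed

text \<open>Contracting a wedge product of vectors dual to a spanning family of \<open>M\<close> would produce a
  multiple of \<open>s\<close> with nonzero scalar part; but \<open>s\<close> is odd.\<close>

lemma triangular_family_not_spanning:
  assumes "\<forall>j<m. \<forall>i\<le>j. pairing n (snd (K j)) (f i) = (if i = j then 1 else 0)"
  shows "\<not> spanned_by M K m"
proof
  assume "spanned_by M K m"
  then obtain r where "cliff_prod n K m (wedge_prod n f ext_one m) = (\<lambda>S. r * s S)"
    using cliff_prod_multiple_of_s wedge_prod_in_ext_alg[OF ext_one_in_ext_alg] by blast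
  hence "(1::'a) = r * s {}" using cliff_prod_wedge_prod_empty[OF assms] by metis
  thus False using s_empty local_ring_zero_neq_one[OF local] by simp
qed

lemma rank_pos: "0 < n"
proof (rule ccontr)
  assume "\<not> 0 < n"
  hence "spanned_by M (\<lambda>_. pzero) 0"
    using submod unfolding spanned_by_def is_submod_def HHcar_def Hcar_def
    by (auto simp: plc_0 pzero_def)
  thus False using triangular_family_not_spanning[of 0] by simp
qed

lemma spinor_degree_one:
  assumes K: "spanned_by M K (Suc m)" and K0: "snd (K 0) = (\<lambda>_. 0)"
    and dual: "\<forall>j<m. \<forall>i\<le>j. pairing n (snd (K (Suc j))) (f i) = (if i = j then 1 else 0)"
  shows "\<exists>r. \<forall>k<n. r * s {k} = fst (K 0) k"
proof -
  let ?w = "wedge_prod n f ext_one m" and ?y = "cliff_prod n (\<lambda>j. K (Suc j)) m (wedge_prod n f ext_one m)"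
  obtain r where r: "cliff_prod n K (Suc m) ?w = (\<lambda>S. r * s S)"
    using cliff_prod_multiple_of_s[OF K wedge_prod_in_ext_alg[OF ext_one_in_ext_alg]] by blast
  have "?y {} = 1" by (rule cliff_prod_wedge_prod_empty[OF dual])
  hence "r * s {k} = fst (K 0) k" if "k < n" for k
    using r cliff_singleton_snd_0[OF that K0, of ?y] unfolding cliff_prod_Suc_shift by (metis mult_1_right)
  thus ?thesis by blast
qed

lemma coordinate_ideal_eq_UNIV_iff:
  "{(\<Sum>i<n. f' i * s {i}) | f'. f' \<in> Hcar n} = UNIV \<longleftrightarrow> (\<exists>i<n. s {i} dvd 1)"
proof
  assume "{(\<Sum>i<n. f' i * s {i}) | f'. f' \<in> Hcar n} = UNIV"
  hence "1 \<in> {(\<Sum>i<n. f' i * s {i}) | f'. f' \<in> Hcar n}" by simp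
  then obtain f' :: "nat \<Rightarrow> 'a" where "(\<Sum>i<n. f' i * s {i}) = 1" by auto
  then obtain i where "i < n" "f' i * s {i} dvd 1"
    using local_ring_unit_sum[OF local, of "{..<n}" "\<lambda>i. f' i * s {i}"] by auto
  thus "\<exists>i<n. s {i} dvd 1" by (blast intro: dvd_mult_right)
next
  assume "\<exists>i<n. s {i} dvd 1"
  then obtain i u where i: "i < n" "1 = s {i} * u" by (blast elim: dvdE)
  have "a \<in> {(\<Sum>i<n. f' i * s {i}) | f'. f' \<in> Hcar n}" for a
  proof -
    have "(\<Sum>k<n. (a * u) * std_basis i k * s {k}) = a * u * s {i}"
      using i(1) by (simp add: std_basis_def if_distrib[of "\<lambda>t. t * _"] if_distrib[of "\<lambda>t. _ * t"] cong: if_cong)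
    also have "\<dots> = a" using i(2) by (simp add: mult_ac)
    finally show ?thesis using i(1)
      by (intro CollectI exI[of _ "\<lambda>k. (a * u) * std_basis i k"]) (simp add: Hcar_def std_basis_def)
  qed
  thus "{(\<Sum>i<n. f' i * s {i}) | f'. f' \<in> Hcar n} = UNIV" by blast
qed

lemma spanned_by_normal_gens:
  assumes "M = {plc c (normal_gens n e e' X) n | c. True}"
  shows "spanned_by M (normal_gens n e e' X) n"
  unfolding spanned_by_def assms using plc_unit[symmetric] by blast

lemma normal_form_imp_unit_coordinate:
  assumes dual: "is_dual_basis n e e'" and M: "M = {plc c (normal_gens n e e' X) n | c. True}"
  shows "\<exists>i<n. s {i} dvd 1"
proof -
  let ?G = "normal_gens n e e' X"
  have n: "n = Suc (n - 1)" using rank_pos by simp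
  have "\<forall>j<n - 1. \<forall>i\<le>j. pairing n (snd (?G (Suc j))) (e (Suc i)) = (if i = j then 1 else 0)"
    using dual unfolding is_dual_basis_def pairing_def normal_gens_def by auto
  then obtain r where r: "\<forall>k<n. r * s {k} = e 0 k"
    using spinor_degree_one[of ?G "n - 1"] spanned_by_normal_gens[OF M] n
    by (force simp: normal_gens_def)
  have "(\<Sum>k<n. (r * e' 0 k) * s {k}) = (\<Sum>k<n. e' 0 k * e 0 k)"
    by (rule sum.cong) (auto simp: r[rule_format, symmetric] mult_ac)
  also have "\<dots> = 1" using dual rank_pos unfolding is_dual_basis_def by auto
  finally obtain k where "k < n" "(r * e' 0 k) * s {k} dvd 1"
    using local_ring_unit_sum[OF local, of "{..<n}" "\<lambda>k. (r * e' 0 k) * s {k}"] by auto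
  thus ?thesis by (blast intro: dvd_mult_right)
qed

lemma unit_coordinate_imp_normal_form:
  assumes basis: "is_pbasis M n b" and i0: "i0 < n" "s {i0} dvd 1"
  shows "\<exists>e e' X. is_Hbasis n e \<and> is_dual_basis n e e' \<and>
    (\<forall>i\<in>{1..<n}. \<forall>j\<in>{1..<n}. X j i = - X i j) \<and> M = {plc c (normal_gens n e e' X) n | c. True}"
proof -
  from i0(2) obtain u where "1 = s {i0} * u" by (rule dvdE)
  hence u: "s {i0} * u = 1" by simp
  define e where "e = adapted_basis s i0"
  define e' where "e' = adapted_dual s i0 u"
  let ?X = "normal_matrix n s e'" and ?G = "normal_gens n e e' (normal_matrix n s e')"
  have eH: "\<And>k. k < n \<Longrightarrow> e k \<in> Hcar n"
    unfolding e_def using adapted_basis_Hcar[OF i0(1) s_in_ext_alg] .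
  have dual: "\<And>i j. i < n \<Longrightarrow> j < n \<Longrightarrow> pairing n (e' i) (e j) = (if i = j then 1 else 0)"
    unfolding e_def e'_def using adapted_dual_basis[where s = s, OF i0(1) u] .
  have expH: "\<And>x p. x \<in> Hcar n \<Longrightarrow> x p = (\<Sum>k<n. pairing n (e' k) x * e k p)"
    unfolding e_def e'_def using adapted_basis_expansion[where s = s, OF i0(1) u s_in_ext_alg] .
  have expD: "\<And>f p. f \<in> Hcar n \<Longrightarrow> f p = (\<Sum>k<n. pairing n f (e k) * e' k p)"
    unfolding e_def e'_def using adapted_dual_expansion[where s = s, OF i0(1) u s_in_ext_alg] .
  have e0: "e 0 = (\<lambda>k. s {k})" by (simp add: e_def adapted_basis_def)
  have q: "pairing n (e' 0) (\<lambda>k. s {k}) = 1" using dual[OF rank_pos rank_pos] e0 by simp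
  have span: "\<forall>x\<in>M. \<exists>c. x = plc c ?G n"
  proof
    fix x assume x: "x \<in> M"
    obtain f p where fp: "x = (f, p)" by (cases x)
    hence "f \<in> Hcar n" "p \<in> Hcar n" using x submod unfolding is_submod_def HHcar_def by auto
    thus "\<exists>c. x = plc c ?G n"
      using annihilator_in_normal_span[OF rank_pos eH expH expD e0 q] cliff_s[OF x] fp by simp
  qed
  have spanned: "spanned_by M ?G n" by (rule spanning_family_in_direct_summand[OF summand basis span])
  have "polar n (?G i) (?G j) = 0" if "i \<in> {1..<n}" "j \<in> {1..<n}" for i j
    using spanned polar_eq_0 that unfolding spanned_by_def by simp
  hence "\<forall>i\<in>{1..<n}. \<forall>j\<in>{1..<n}. ?X j i = - ?X i j"
    using normal_gens_skew[where X = ?X, OF dual] by blast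
  moreover have "M = {plc c ?G n | c. True}"
    using span plc_in_submod[OF submod] spanned unfolding spanned_by_def by blast
  moreover have "is_Hbasis n e" by (rule dual_expansion_imp_Hbasis[OF eH dual expH])
  moreover have "is_dual_basis n e e'"
    unfolding is_dual_basis_def using dual adapted_dual_Hcar[OF i0(1)] by (auto simp: e'_def pairing_def)
  ultimately show ?thesis by blast
qed

text \<open>If \<open>z\<close> were a unit, the basis would be triangular with respect to unit vectors.\<close>

lemma normalized_basis_last_nonunit:
  assumes W: "spanned_by M W n" and a0: "a0 < n"
    and snd_W: "\<forall>c<n - 1. \<forall>a<n - 1. snd (W c) (insert_index a0 a) = (if a = c then 1 else 0)"
    and last: "snd (W (n - 1)) = (\<lambda>p. if p = a0 then z else 0)"
  shows "\<not> z dvd 1"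
proof
  let ?N = "n - 1"
  assume "z dvd 1"
  then obtain zi where zi: "1 = z * zi" by (rule dvdE)
  define K where "K k = (if k < ?N then W k else psmul zi (W ?N))" for k
  define f :: "nat \<Rightarrow> nat \<Rightarrow> 'a" where
    "f i = (if i < ?N then std_basis (insert_index a0 i) else std_basis a0)" for i
  have WM: "\<forall>k<n. W k \<in> M" using W unfolding spanned_by_def by blast
  have "spanned_by M K n"
  proof (rule spanned_by_trans[OF W])
    show "\<forall>k<n. K k \<in> M" using WM submod unfolding K_def is_submod_def by auto
    show "\<forall>k<n. \<exists>d. W k = plc d K n"
    proof (intro allI impI)
      fix k assume k: "k < n"
      show "\<exists>d. W k = plc d K n"
      proof (cases "k < ?N")
        case True thus ?thesis using plc_unit[OF k, of K]
          by (intro exI[of _ "\<lambda>l. if l = k then 1 else 0"]) (simp add: K_def)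
      next
        case False
        hence "k = ?N" using k by simp
        moreover have "plc (\<lambda>l. if l = ?N then z else 0) K n = psmul z (K ?N)" by (rule plc_single) (use k in simp)
        moreover have "psmul z (K ?N) = W ?N"
          unfolding K_def using zi by (intro pair_fun_eqI) (simp_all add: mult.assoc[symmetric] mult.commute[of z])
        ultimately show ?thesis by metis
      qed
    qed
  qed
  moreover have "\<forall>j<n. \<forall>i\<le>j. pairing n (snd (K j)) (f i) = (if i = j then 1 else 0)"
  proof (intro allI impI)
    fix j i assume "j < n" "i \<le> j"
    thus "pairing n (snd (K j)) (f i) = (if i = j then 1 else 0)"
      using a0 snd_W last zi insert_index_less[of _ n a0] insert_index_neq[of a0]
      by (cases "j < ?N") (auto simp: K_def f_def pairing_std_basis_right mult.commute)
  qed
  ultimately show False using triangular_family_not_spanning by blast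
qed

text \<open>If \<open>z\<close> is not a unit, isotropy forces the \<open>a\<^sub>0\<close>-coordinate of the \<open>H\<close>-component of the last
  basis vector to be the unit coordinate, and then \<open>Q = 0\<close> on it gives \<open>z = 0\<close>.\<close>

lemma normalized_basis_last_isotropic:
  assumes basis: "is_pbasis M n b" and W: "spanned_by M W n" and a0: "a0 < n"
    and snd_W: "\<forall>c<n - 1. \<forall>a<n - 1. snd (W c) (insert_index a0 a) = (if a = c then 1 else 0)"
    and last: "snd (W (n - 1)) = (\<lambda>p. if p = a0 then z else 0)" and z: "\<not> z dvd 1"
  shows "fst (W (n - 1)) a0 dvd 1" "z = 0"
proof -
  let ?N = "n - 1" and ?g = "W (n - 1)"
  have WM: "\<forall>k<n. W k \<in> M" using W unfolding spanned_by_def by blast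
  have "?N < n" using a0 by simp
  then obtain i where i: "i < n" "fst ?g i dvd 1 \<or> snd ?g i dvd 1"
    using spanning_family_unimodular[OF local summand basis W] by blast
  show unit: "fst ?g a0 dvd 1"
  proof (rule ccontr)
    assume nu: "\<not> fst ?g a0 dvd 1"
    have "\<not> fst ?g (insert_index a0 c) dvd 1" if c: "c < ?N" for c
    proof -
      have "pairing n (snd (W c)) (fst ?g) = snd (W c) a0 * fst ?g a0 + fst ?g (insert_index a0 c)"
        unfolding pairing_def sum_lessThan_insert_index[OF a0] using c snd_W
        by (simp add: if_distrib[of "\<lambda>t. t * _"] cong: if_cong)
      moreover have "pairing n (snd ?g) (fst (W c)) = z * fst (W c) a0"
        using a0 unfolding pairing_def last by (simp add: if_distrib[of "\<lambda>t. t * _"] cong: if_cong)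
      moreover have "polar n ?g (W c) = 0" using polar_eq_0 WM c by simp
      ultimately have eq: "fst ?g (insert_index a0 c) = - (z * fst (W c) a0 + snd (W c) a0 * fst ?g a0)"
        unfolding polar_def by (simp add: eq_neg_iff_add_eq_0 algebra_simps)
      have "\<not> (z * fst (W c) a0 + snd (W c) a0 * fst ?g a0) dvd 1"
        by (rule local_ring_nonunit_add_mult[OF local z nu])
      thus ?thesis unfolding eq minus_dvd_iff .
    qed
    moreover have "\<not> snd ?g p dvd 1" for p
      using z local_ring_zero_neq_one[OF local] unfolding last by simp
    ultimately show False using i nu insert_index_surj[OF a0 i(1)] by (cases "i = a0") auto
  qed
  have "Qform n ?g = z * fst ?g a0"
    using a0 unfolding Qform_def last by (simp add: if_distrib[of "\<lambda>t. t * _"] cong: if_cong)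
  moreover have "Qform n ?g = 0" using isotropic WM a0 unfolding totally_isotropic_def by simp
  ultimately have "z * fst ?g a0 = 0" by simp
  moreover obtain v where "1 = fst ?g a0 * v" using unit by (rule dvdE)
  ultimately have "z * 1 = 0" by (metis mult.assoc mult_zero_left)
  thus "z = 0" by simp
qed

lemma minor_ideal_imp_unit_coordinate:
  assumes basis: "is_pbasis M n b" and minor: "minor_ideal n (n - 1) (Pmatrix b) = UNIV"
  shows "\<exists>i<n. s {i} dvd 1"
proof -
  let ?N = "n - 1"
  obtain a0 j0 where a0: "a0 < n" and j0: "j0 < n"
    and unit: "detk ?N (\<lambda>a c. Pmatrix b (insert_index a0 a) (insert_index j0 c)) dvd 1"
    using minor unfolding minor_ideal_eq_UNIV_iff[OF local rank_pos] by blast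
  obtain W z where W: "spanned_by M W n"
    and snd_W: "\<forall>c<?N. \<forall>a<?N. snd (W c) (insert_index a0 a) = (if a = c then 1 else 0)"
    and last: "snd (W ?N) = (\<lambda>p. if p = a0 then z else 0)"
    using unit_minor_normalized_basis[OF summand basis a0 j0 unit] by blast
  have z: "\<not> z dvd 1" by (rule normalized_basis_last_nonunit[OF W a0 snd_W last])
  have g_unit: "fst (W ?N) a0 dvd 1" and z0: "z = 0"
    using normalized_basis_last_isotropic[OF basis W a0 snd_W last z] by blast+
  define K where "K k = (if k = 0 then W ?N else W (k - 1))" for k
  have "spanned_by M K n"
  proof (rule spanned_by_trans[OF W])
    show "\<forall>k<n. K k \<in> M" using W unfolding spanned_by_def K_def by auto
    have "W k = plc (\<lambda>l. if l = (if k < ?N then Suc k else 0) then 1 else 0) K n" if "k < n" for k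
    proof (cases "k < ?N")
      case True thus ?thesis using plc_unit[of "Suc k" n K] by (simp add: K_def)
    next
      case False
      hence "k = ?N" using that by simp
      thus ?thesis using plc_unit[OF rank_pos, of K] by (simp add: K_def)
    qed
    thus "\<forall>k<n. \<exists>d. W k = plc d K n" by blast
  qed
  hence K: "spanned_by M K (Suc ?N)" using rank_pos by simp
  have "snd (W ?N) = (\<lambda>_. 0)" unfolding last z0 by simp
  hence K0: "snd (K 0) = (\<lambda>_. 0)" by (simp add: K_def)
  have "\<forall>j<?N. \<forall>i\<le>j. pairing n (snd (K (Suc j))) (std_basis (insert_index a0 i))
      = (if i = j then 1 else 0)"
    using snd_W insert_index_less[of _ n a0] by (auto simp: K_def pairing_std_basis_right)
  hence "\<exists>r. \<forall>k<n. r * s {k} = fst (K 0) k" by (rule spinor_degree_one[OF K K0])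
  then obtain r where "\<forall>k<n. r * s {k} = fst (K 0) k" by blast
  hence "r * s {a0} dvd 1" using a0 g_unit by (simp add: K_def)
  thus ?thesis using a0 by (blast intro: dvd_mult_right)
qed

lemma normal_form_iff_unit_coordinate:
  assumes basis: "is_pbasis M n b"
  shows "(\<exists>e e' X. is_Hbasis n e \<and> is_dual_basis n e e' \<and> (\<forall>i\<in>{1..<n}. \<forall>j\<in>{1..<n}. X j i = - X i j) \<and>
      M = {plc c (normal_gens n e e' X) n | c. True}) \<longleftrightarrow> (\<exists>i<n. s {i} dvd 1)"
    (is "?normal_form \<longleftrightarrow> ?unit_coordinate")
proof
  assume ?normal_form
  then obtain e e' X where "is_dual_basis n e e'" "M = {plc c (normal_gens n e e' X) n | c. True}"
    by blast
  thus ?unit_coordinate by (rule normal_form_imp_unit_coordinate)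
next
  assume ?unit_coordinate
  then obtain i where "i < n" "s {i} dvd 1" by blast
  thus ?normal_form by (rule unit_coordinate_imp_normal_form[OF basis])
qed

lemma unit_coordinate_iff_minor_ideal:
  assumes basis: "is_pbasis M n b"
  shows "(\<exists>i<n. s {i} dvd 1) \<longleftrightarrow> (\<forall>b. is_pbasis M n b \<longrightarrow> minor_ideal n (n - 1) (Pmatrix b) = UNIV)"
proof
  assume "\<exists>i<n. s {i} dvd 1"
  then obtain e e' X where dual: "is_dual_basis n e e'" and M: "M = {plc c (normal_gens n e e' X) n | c. True}"
    unfolding normal_form_iff_unit_coordinate[OF basis, symmetric] by blast
  show "\<forall>b. is_pbasis M n b \<longrightarrow> minor_ideal n (n - 1) (Pmatrix b) = UNIV"
    by (intro allI impI normal_form_imp_minor_ideal[OF local summand dual M rank_pos])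
next
  assume "\<forall>b. is_pbasis M n b \<longrightarrow> minor_ideal n (n - 1) (Pmatrix b) = UNIV"
  hence "minor_ideal n (n - 1) (Pmatrix b) = UNIV" using basis by blast
  thus "\<exists>i<n. s {i} dvd 1" by (rule minor_ideal_imp_unit_coordinate[OF basis])
qed

end

theorem mainTheorem6:
  fixes n :: nat
    and M :: "((nat \<Rightarrow> 'a::comm_ring_1) \<times> (nat \<Rightarrow> 'a)) set"
    and s :: "nat set \<Rightarrow> 'a"
  assumes local: "local_ring TYPE('a)"
    and half: "(2::'a) dvd 1"
    and summand: "is_direct_summand n M"
    and isotropic: "totally_isotropic n M"
    and rank: "\<exists>b. is_pbasis M n b"
    and s_odd: "s \<in> ext_odd n"
    and ann: "{w \<in> ext_alg n. \<forall>x\<in>M. cliff n x w = (\<lambda>_. 0)} = {(\<lambda>S. r * s S) | r. True}"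
  shows "((\<exists>e e' X. is_Hbasis n e \<and> is_dual_basis n e e' \<and>
              (\<forall>i\<in>{1..<n}. \<forall>j\<in>{1..<n}. X j i = - X i j) \<and>
              M = {plc c (\<lambda>i. if i = 0 then (e 0, \<lambda>_. 0)
                              else (\<lambda>k. \<Sum>j\<in>{1..<n}. X j i * e j k, e' i)) n | c. True})
          \<longleftrightarrow> {(\<Sum>i<n. f' i * s {i}) | f'. f' \<in> Hcar n} = UNIV)
       \<and> ({(\<Sum>i<n. f' i * s {i}) | f'. f' \<in> Hcar n} = UNIV
          \<longleftrightarrow> (\<forall>b. is_pbasis M n b \<longrightarrow> minor_ideal n (n - 1) (Pmatrix b) = UNIV))"
proof -
  interpret pure_spinor n M s
    using local half summand isotropic s_odd ann by unfold_locales
  obtain b where b: "is_pbasis M n b" using rank by blast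
  show ?thesis
    using normal_form_iff_unit_coordinate[OF b] unit_coordinate_iff_minor_ideal[OF b]
    unfolding coordinate_ideal_eq_UNIV_iff normal_gens_def by (rule conjI)
qed

end
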